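(* Let $T$ be an $L$-theory with $\ulcorner T\urcorner$ arithmetical. There is an arithmetical formula $\Phi_0(X)$ of second-order arithmetic (with one free set variable) such that for every $S\subseteq\mathbb N$, $\Phi_0(S)$ holds if and only if $S=\ulcorner T'\urcorner$ for some maximal consistent Henkin $L(C)$-theory $T'$ containing every universal $L$-sentence provable from $T$.
   Context: $C=\{c_1,c_2,\dots\}$ new constants, $L(C)$ computable. An arithmetical formula is a second-order formula with only number quantifiers. An $L(C)$-theory $T'$ is maximal consistent if it is consistent and (a) whenever $\sigma\mathbin{\dot-}2^{-n}\in T'$ for all $n$, then $\sigma\in T'$; (b) for any restricted sentences $\sigma,\tau$, either $\sigma\mathbin{\dot-}\tau\in T'$ or $\tau\mathbin{\dot-}\sigma\in T'$. $T'$ is Henkin if for every restricted formula $\varphi(x)$ and dyadic rationals $p<q$ there is a constant $c$ with $\min(\sup_x\varphi(x)\mathbin{\dot-}q,\ p\mathbin{\dot-}\varphi(c))\in T'$. $\ulcorner T'\urcorner$ is the set of Gödel numbers of its sentences. *)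

theory Defs
  imports Complex_Main "HOL-Library.Nat_Bijection"
begin

section \<open>Continuous first-order logic: syntax (Ben Yaacov--Pedersen style)\<close>

text \<open>Terms of L(C): variables, function symbols of L (coded by naturals), and the
  new constants C = {c_1, c_2, ...}; TCst n stands for c_(n+1).\<close>
datatype trm = TVar nat | TFn nat "trm list" | TCst nat

text \<open>Restricted formulas: atomic d(s,t) and P(ts); connectives neg, half, truncated
  minus; quantifier sup (inf is the abbreviation neg sup neg).\<close>
datatype fm =
    FDist trm trm
  | FPred nat "trm list"
  | FNeg fm
  | FHalf fm
  | FMinus fm fm
  | FSup nat fm

definition FInf :: "nat \<Rightarrow> fm \<Rightarrow> fm" where
  "FInf x \<phi> = FNeg (FSup x (FNeg \<phi>))"

definition FMin :: "fm \<Rightarrow> fm \<Rightarrow> fm" where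
  "FMin a b = FMinus a (FMinus a b)"

definition FZero :: fm where "FZero = FSup 0 (FDist (TVar 0) (TVar 0))"
definition FOne :: fm where "FOne = FNeg FZero"

text \<open>dyad m k is the sentence denoting k/2^m (for k \<le> 2^m);
  in particular dyad n 1 = half^n 1 denotes 2^-n.\<close>
fun dyad :: "nat \<Rightarrow> nat \<Rightarrow> fm" where
  "dyad 0 k = (if k = 0 then FZero else FOne)"
| "dyad (Suc m) k = (if k \<le> 2 ^ m then FHalf (dyad m k)
                     else FNeg (FHalf (dyad m (2 ^ Suc m - k))))"

definition canon_dyadic :: "nat \<Rightarrow> nat \<Rightarrow> bool" where
  "canon_dyadic k m \<longleftrightarrow> k \<le> 2 ^ m \<and> (m = 0 \<or> odd k)"

definition dval :: "nat \<Rightarrow> nat \<Rightarrow> real" where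
  "dval k m = real k / 2 ^ m"

record lang =
  fsyms :: "nat set"
  psyms :: "nat set"
  farity :: "nat \<Rightarrow> nat"
  parity :: "nat \<Rightarrow> nat"
  fmod :: "nat \<Rightarrow> nat \<Rightarrow> real \<Rightarrow> real"   \<comment> \<open>modulus of uniform continuity of f in argument i\<close>
  pmod :: "nat \<Rightarrow> nat \<Rightarrow> real \<Rightarrow> real"

definition is_lang :: "lang \<Rightarrow> bool" where
  "is_lang L \<longleftrightarrow>
     (\<forall>f i e. f \<in> fsyms L \<longrightarrow> i < farity L f \<longrightarrow> 0 < e \<longrightarrow> e \<le> 1 \<longrightarrow>
        0 < fmod L f i e \<and> fmod L f i e \<le> 1) \<and>
     (\<forall>P i e. P \<in> psyms L \<longrightarrow> i < parity L P \<longrightarrow> 0 < e \<longrightarrow> e \<le> 1 \<longrightarrow>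
        0 < pmod L P i e \<and> pmod L P i e \<le> 1)"

fun wf_trm :: "lang \<Rightarrow> bool \<Rightarrow> trm \<Rightarrow> bool" where
  "wf_trm L b (TVar x) = True"
| "wf_trm L b (TCst c) = b"
| "wf_trm L b (TFn f ts) = (f \<in> fsyms L \<and> length ts = farity L f \<and> (\<forall>t\<in>set ts. wf_trm L b t))"

text \<open>b = True: formulas of L(C); b = False: formulas of L.\<close>
fun wf_fm :: "lang \<Rightarrow> bool \<Rightarrow> fm \<Rightarrow> bool" where
  "wf_fm L b (FDist s t) = (wf_trm L b s \<and> wf_trm L b t)"
| "wf_fm L b (FPred P ts) = (P \<in> psyms L \<and> length ts = parity L P \<and> (\<forall>t\<in>set ts. wf_trm L b t))"
| "wf_fm L b (FNeg \<phi>) = wf_fm L b \<phi>"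
| "wf_fm L b (FHalf \<phi>) = wf_fm L b \<phi>"
| "wf_fm L b (FMinus \<phi> \<psi>) = (wf_fm L b \<phi> \<and> wf_fm L b \<psi>)"
| "wf_fm L b (FSup x \<phi>) = wf_fm L b \<phi>"

fun fv_trm :: "trm \<Rightarrow> nat set" where
  "fv_trm (TVar x) = {x}"
| "fv_trm (TCst c) = {}"
| "fv_trm (TFn f ts) = (\<Union>t\<in>set ts. fv_trm t)"

fun fv_fm :: "fm \<Rightarrow> nat set" where
  "fv_fm (FDist s t) = fv_trm s \<union> fv_trm t"
| "fv_fm (FPred P ts) = (\<Union>t\<in>set ts. fv_trm t)"
| "fv_fm (FNeg \<phi>) = fv_fm \<phi>"
| "fv_fm (FHalf \<phi>) = fv_fm \<phi>"
| "fv_fm (FMinus \<phi> \<psi>) = fv_fm \<phi> \<union> fv_fm \<psi>"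
| "fv_fm (FSup x \<phi>) = fv_fm \<phi> - {x}"

fun subst_trm :: "nat \<Rightarrow> trm \<Rightarrow> trm \<Rightarrow> trm" where
  "subst_trm x t (TVar y) = (if y = x then t else TVar y)"
| "subst_trm x t (TCst c) = TCst c"
| "subst_trm x t (TFn f ts) = TFn f (map (subst_trm x t) ts)"

fun subst_fm :: "nat \<Rightarrow> trm \<Rightarrow> fm \<Rightarrow> fm" where
  "subst_fm x t (FDist s u) = FDist (subst_trm x t s) (subst_trm x t u)"
| "subst_fm x t (FPred P ts) = FPred P (map (subst_trm x t) ts)"
| "subst_fm x t (FNeg \<phi>) = FNeg (subst_fm x t \<phi>)"
| "subst_fm x t (FHalf \<phi>) = FHalf (subst_fm x t \<phi>)"
| "subst_fm x t (FMinus \<phi> \<psi>) = FMinus (subst_fm x t \<phi>) (subst_fm x t \<psi>)"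
| "subst_fm x t (FSup y \<phi>) = (if y = x then FSup y \<phi> else FSup y (subst_fm x t \<phi>))"

fun free_for :: "nat \<Rightarrow> trm \<Rightarrow> fm \<Rightarrow> bool" where
  "free_for x t (FDist s u) = True"
| "free_for x t (FPred P ts) = True"
| "free_for x t (FNeg \<phi>) = free_for x t \<phi>"
| "free_for x t (FHalf \<phi>) = free_for x t \<phi>"
| "free_for x t (FMinus \<phi> \<psi>) = (free_for x t \<phi> \<and> free_for x t \<psi>)"
| "free_for x t (FSup y \<phi>) = (x \<notin> fv_fm (FSup y \<phi>) \<or> (y \<notin> fv_trm t \<and> free_for x t \<phi>))"

fun qfree :: "fm \<Rightarrow> bool" where
  "qfree (FSup x \<phi>) = False"
| "qfree (FNeg \<phi>) = qfree \<phi>"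
| "qfree (FHalf \<phi>) = qfree \<phi>"
| "qfree (FMinus \<phi> \<psi>) = (qfree \<phi> \<and> qfree \<psi>)"
| "qfree (FDist s t) = True"
| "qfree (FPred P ts) = True"

fun universal :: "fm \<Rightarrow> bool" where
  "universal (FSup x \<phi>) = universal \<phi>"
| "universal \<phi> = qfree \<phi>"

definition sentence :: "lang \<Rightarrow> bool \<Rightarrow> fm \<Rightarrow> bool" where
  "sentence L b \<sigma> \<longleftrightarrow> wf_fm L b \<sigma> \<and> fv_fm \<sigma> = {}"

definition is_theory :: "lang \<Rightarrow> bool \<Rightarrow> fm set \<Rightarrow> bool" where
  "is_theory L b T \<longleftrightarrow> (\<forall>\<sigma>\<in>T. sentence L b \<sigma>)"

section \<open>The Ben Yaacov--Pedersen proof system\<close>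

inductive deriv :: "lang \<Rightarrow> bool \<Rightarrow> fm set \<Rightarrow> fm \<Rightarrow> bool" for L b \<Gamma> where
  hyp: "\<phi> \<in> \<Gamma> \<Longrightarrow> wf_fm L b \<phi> \<Longrightarrow> deriv L b \<Gamma> \<phi>"
| A1: "wf_fm L b \<phi> \<Longrightarrow> wf_fm L b \<psi> \<Longrightarrow> deriv L b \<Gamma> (FMinus (FMinus \<phi> \<psi>) \<phi>)"
| A2: "wf_fm L b \<phi> \<Longrightarrow> wf_fm L b \<psi> \<Longrightarrow> wf_fm L b \<chi> \<Longrightarrow>
       deriv L b \<Gamma> (FMinus (FMinus (FMinus \<chi> \<phi>) (FMinus \<chi> \<psi>)) (FMinus \<psi> \<phi>))"
| A3: "wf_fm L b \<phi> \<Longrightarrow> wf_fm L b \<psi> \<Longrightarrow>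
       deriv L b \<Gamma> (FMinus (FMinus \<phi> (FMinus \<phi> \<psi>)) (FMinus \<psi> (FMinus \<psi> \<phi>)))"
| A4: "wf_fm L b \<phi> \<Longrightarrow> wf_fm L b \<psi> \<Longrightarrow>
       deriv L b \<Gamma> (FMinus (FMinus (FNeg \<phi>) (FNeg \<psi>)) (FMinus \<psi> \<phi>))"
| A5: "wf_fm L b \<phi> \<Longrightarrow> deriv L b \<Gamma> (FMinus (FHalf \<phi>) (FMinus \<phi> (FHalf \<phi>)))"
| A6: "wf_fm L b \<phi> \<Longrightarrow> deriv L b \<Gamma> (FMinus (FMinus \<phi> (FHalf \<phi>)) (FHalf \<phi>))"
| A7: "wf_fm L b \<phi> \<Longrightarrow> wf_fm L b \<psi> \<Longrightarrow>
       deriv L b \<Gamma> (FMinus (FMinus (FSup x \<psi>) (FSup x \<phi>)) (FSup x (FMinus \<psi> \<phi>)))"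
| A8: "wf_fm L b \<phi> \<Longrightarrow> wf_trm L b t \<Longrightarrow> free_for x t \<phi> \<Longrightarrow>
       deriv L b \<Gamma> (FMinus (subst_fm x t \<phi>) (FSup x \<phi>))"
| A9: "wf_fm L b \<phi> \<Longrightarrow> x \<notin> fv_fm \<phi> \<Longrightarrow> deriv L b \<Gamma> (FMinus (FSup x \<phi>) \<phi>)"
| A10: "deriv L b \<Gamma> (FDist (TVar x) (TVar x))"
| A11: "deriv L b \<Gamma> (FMinus (FDist (TVar x) (TVar y)) (FDist (TVar y) (TVar x)))"
| A12: "deriv L b \<Gamma> (FMinus (FMinus (FDist (TVar x) (TVar z)) (FDist (TVar x) (TVar y)))
                               (FDist (TVar y) (TVar z)))"
| A13: "f \<in> fsyms L \<Longrightarrow> length xs = farity L f \<Longrightarrow> i < length xs \<Longrightarrow>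
        canon_dyadic kr mr \<Longrightarrow> canon_dyadic ke me \<Longrightarrow> 0 < kr \<Longrightarrow> 0 < ke \<Longrightarrow>
        dval kr mr < fmod L f i (dval ke me) \<Longrightarrow>
        deriv L b \<Gamma> (FMin (FMinus (FDist (TFn f (map TVar (xs[i := z]))) (TFn f (map TVar (xs[i := w]))))
                                  (dyad me ke))
                          (FMinus (dyad mr kr) (FDist (TVar z) (TVar w))))"
| A14: "P \<in> psyms L \<Longrightarrow> length xs = parity L P \<Longrightarrow> i < length xs \<Longrightarrow>
        canon_dyadic kr mr \<Longrightarrow> canon_dyadic ke me \<Longrightarrow> 0 < kr \<Longrightarrow> 0 < ke \<Longrightarrow>
        dval kr mr < pmod L P i (dval ke me) \<Longrightarrow>
        deriv L b \<Gamma> (FMin (FMinus (FMinus (FPred P (map TVar (xs[i := z]))) (FPred P (map TVar (xs[i := w]))))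
                                  (dyad me ke))
                          (FMinus (dyad mr kr) (FDist (TVar z) (TVar w))))"
| MP: "deriv L b \<Gamma> \<phi> \<Longrightarrow> deriv L b \<Gamma> (FMinus \<psi> \<phi>) \<Longrightarrow> deriv L b \<Gamma> \<psi>"
| Gen: "deriv L b \<Gamma> \<phi> \<Longrightarrow> deriv L b \<Gamma> (FSup x \<phi>)"

definition consistent :: "lang \<Rightarrow> bool \<Rightarrow> fm set \<Rightarrow> bool" where
  "consistent L b \<Gamma> \<longleftrightarrow> (\<exists>\<phi>. wf_fm L b \<phi> \<and> \<not> deriv L b \<Gamma> \<phi>)"

definition max_consistent :: "lang \<Rightarrow> fm set \<Rightarrow> bool" where
  "max_consistent L T' \<longleftrightarrow> consistent L True T' \<and>
     (\<forall>\<sigma>. sentence L True \<sigma> \<longrightarrow> (\<forall>n. FMinus \<sigma> (dyad n 1) \<in> T') \<longrightarrow> \<sigma> \<in> T') \<and>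
     (\<forall>\<sigma> \<tau>. sentence L True \<sigma> \<longrightarrow> sentence L True \<tau> \<longrightarrow>
        FMinus \<sigma> \<tau> \<in> T' \<or> FMinus \<tau> \<sigma> \<in> T')"

definition henkin :: "lang \<Rightarrow> fm set \<Rightarrow> bool" where
  "henkin L T' \<longleftrightarrow>
     (\<forall>\<phi> x kp mp kq mq. wf_fm L True \<phi> \<longrightarrow> fv_fm \<phi> \<subseteq> {x} \<longrightarrow>
        canon_dyadic kp mp \<longrightarrow> canon_dyadic kq mq \<longrightarrow> dval kp mp < dval kq mq \<longrightarrow>
        (\<exists>c. FMin (FMinus (FSup x \<phi>) (dyad mq kq)) (FMinus (dyad mp kp) (subst_fm x (TCst c) \<phi>)) \<in> T'))"

primrec enc_trm :: "trm \<Rightarrow> nat" where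
  "enc_trm (TVar x) = prod_encode (0, x)"
| "enc_trm (TFn f ts) = prod_encode (1, prod_encode (f, list_encode (map enc_trm ts)))"
| "enc_trm (TCst c) = prod_encode (2, c)"

primrec enc_fm :: "fm \<Rightarrow> nat" where
  "enc_fm (FDist s t) = prod_encode (0, prod_encode (enc_trm s, enc_trm t))"
| "enc_fm (FPred P ts) = prod_encode (1, prod_encode (P, list_encode (map enc_trm ts)))"
| "enc_fm (FNeg \<phi>) = prod_encode (2, enc_fm \<phi>)"
| "enc_fm (FHalf \<phi>) = prod_encode (3, enc_fm \<phi>)"
| "enc_fm (FMinus \<phi> \<psi>) = prod_encode (4, prod_encode (enc_fm \<phi>, enc_fm \<psi>))"
| "enc_fm (FSup x \<phi>) = prod_encode (5, prod_encode (x, enc_fm \<phi>))"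

section \<open>Arithmetical formulas of second-order arithmetic (one set variable X, number quantifiers only)\<close>

datatype aterm = AV nat | AZ | AS aterm | AAdd aterm aterm | AMul aterm aterm

datatype aform = AEq aterm aterm | ALt aterm aterm | AIn aterm
  | ANot aform | AAnd aform aform | AEx nat aform

primrec aeval :: "(nat \<Rightarrow> nat) \<Rightarrow> aterm \<Rightarrow> nat" where
  "aeval e (AV x) = e x"
| "aeval e AZ = 0"
| "aeval e (AS t) = Suc (aeval e t)"
| "aeval e (AAdd s t) = aeval e s + aeval e t"
| "aeval e (AMul s t) = aeval e s * aeval e t"

primrec aholds :: "nat set \<Rightarrow> (nat \<Rightarrow> nat) \<Rightarrow> aform \<Rightarrow> bool" where
  "aholds S e (AEq s t) = (aeval e s = aeval e t)"
| "aholds S e (ALt s t) = (aeval e s < aeval e t)"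
| "aholds S e (AIn t) = (aeval e t \<in> S)"
| "aholds S e (ANot \<phi>) = (\<not> aholds S e \<phi>)"
| "aholds S e (AAnd \<phi> \<psi>) = (aholds S e \<phi> \<and> aholds S e \<psi>)"
| "aholds S e (AEx x \<phi>) = (\<exists>n. aholds S (e(x := n)) \<phi>)"

primrec atfv :: "aterm \<Rightarrow> nat set" where
  "atfv (AV x) = {x}"
| "atfv AZ = {}"
| "atfv (AS t) = atfv t"
| "atfv (AAdd s t) = atfv s \<union> atfv t"
| "atfv (AMul s t) = atfv s \<union> atfv t"

primrec afv :: "aform \<Rightarrow> nat set" where
  "afv (AEq s t) = atfv s \<union> atfv t"
| "afv (ALt s t) = atfv s \<union> atfv t"
| "afv (AIn t) = atfv t"
| "afv (ANot \<phi>) = afv \<phi>"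
| "afv (AAnd \<phi> \<psi>) = afv \<phi> \<union> afv \<psi>"
| "afv (AEx x \<phi>) = afv \<phi> - {x}"

primrec first_order :: "aform \<Rightarrow> bool" where
  "first_order (AEq s t) = True"
| "first_order (ALt s t) = True"
| "first_order (AIn t) = False"
| "first_order (ANot \<phi>) = first_order \<phi>"
| "first_order (AAnd \<phi> \<psi>) = (first_order \<phi> \<and> first_order \<psi>)"
| "first_order (AEx x \<phi>) = first_order \<phi>"

definition arithmetical_set :: "nat set \<Rightarrow> bool" where
  "arithmetical_set A \<longleftrightarrow>
     (\<exists>\<phi>. first_order \<phi> \<and> afv \<phi> \<subseteq> {0} \<and> (\<forall>n. n \<in> A \<longleftrightarrow> aholds {} (\<lambda>_. n) \<phi>))"

inductive delta0 :: "aform \<Rightarrow> bool" where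
  "delta0 (AEq s t)"
| "delta0 (ALt s t)"
| "delta0 \<phi> \<Longrightarrow> delta0 (ANot \<phi>)"
| "delta0 \<phi> \<Longrightarrow> delta0 \<psi> \<Longrightarrow> delta0 (AAnd \<phi> \<psi>)"
| "x \<notin> atfv t \<Longrightarrow> delta0 \<phi> \<Longrightarrow> delta0 (AEx x (AAnd (ALt (AV x) t) \<phi>))"

inductive sigma1 :: "aform \<Rightarrow> bool" where
  "delta0 \<phi> \<Longrightarrow> sigma1 \<phi>"
| "sigma1 \<phi> \<Longrightarrow> sigma1 (AEx x \<phi>)"

text \<open>Computably enumerable = Sigma^0_1-definable; computable = c.e. with c.e. complement.\<close>
definition ce_set :: "nat set \<Rightarrow> bool" where
  "ce_set A \<longleftrightarrow> (\<exists>\<phi>. sigma1 \<phi> \<and> afv \<phi> \<subseteq> {0} \<and> (\<forall>n. n \<in> A \<longleftrightarrow> aholds {} (\<lambda>_. n) \<phi>))"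

definition computable_set :: "nat set \<Rightarrow> bool" where
  "computable_set A \<longleftrightarrow> ce_set A \<and> ce_set (- A)"

definition computable_lang :: "lang \<Rightarrow> bool" where
  "computable_lang L \<longleftrightarrow>
     computable_set (fsyms L) \<and> computable_set (psyms L) \<and>
     computable_set {prod_encode (f, farity L f) | f. f \<in> fsyms L} \<and>
     computable_set {prod_encode (P, parity L P) | P. P \<in> psyms L} \<and>
     ce_set {prod_encode (f, prod_encode (i, prod_encode (prod_encode (k, m), prod_encode (k', m'))))
             | f i k m k' m'. f \<in> fsyms L \<and> i < farity L f \<and> 0 < k' \<and> k' \<le> 2 ^ m' \<and>
                 dval k m < fmod L f i (dval k' m')} \<and>
     ce_set {prod_encode (P, prod_encode (i, prod_encode (prod_encode (k, m), prod_encode (k', m'))))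
             | P i k m k' m'. P \<in> psyms L \<and> i < parity L P \<and> 0 < k' \<and> k' \<le> 2 ^ m' \<and>
                 dval k m < pmod L P i (dval k' m')}"

end

theory Submission
  imports Defs
begin

text \<open>Every condition in the characterisation of the code sets \<open>S = \<ulcorner>T'\<urcorner>\<close> is a
  first-order statement about \<open>S\<close> whose quantifiers range over codes and whose atoms are
  syntactic relations on codes: well-formedness, free variables, substitution, dyadic numerals,
  universality and derivability from \<open>S\<close> or from \<open>T\<close>. Each of these relations is the set
  generated by a finitary rule that is itself arithmetical (relative to \<open>S\<close>, and to \<open>T\<close>,
  which is arithmetical). Membership in a generated set means having a finite staged
  justification, and finite sets are coded by single numbers via Goedel's Chinese-remainder
  trick, so every such relation, and with it the whole characterisation, is expressed by one
  arithmetical formula with the free set variable \<open>S\<close>.\<close>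

named_theorems definable_intros

section \<open>Arithmetical definability\<close>

datatype dtrm = V nat | Z | Sc dtrm | Ad dtrm dtrm | Mu dtrm dtrm
datatype dfm = Eq dtrm dtrm | Ls dtrm dtrm | Mem dtrm | Ng dfm | Cj dfm dfm | Ex dfm

definition econs :: "nat \<Rightarrow> (nat \<Rightarrow> nat) \<Rightarrow> nat \<Rightarrow> nat" where
  "econs n e = (\<lambda>i. case i of 0 \<Rightarrow> n | Suc j \<Rightarrow> e j)"

lemma econs_simps[simp]: "econs n e 0 = n" "econs n e (Suc j) = e j"
  by (simp_all add: econs_def)

primrec deval :: "(nat \<Rightarrow> nat) \<Rightarrow> dtrm \<Rightarrow> nat" where
  "deval e (V i) = e i"
| "deval e Z = 0"
| "deval e (Sc t) = Suc (deval e t)"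
| "deval e (Ad s t) = deval e s + deval e t"
| "deval e (Mu s t) = deval e s * deval e t"

text \<open>Arithmetical formulas in de Bruijn notation: \<open>Ex\<close> binds index 0.\<close>
primrec dholds :: "nat set \<Rightarrow> (nat \<Rightarrow> nat) \<Rightarrow> dfm \<Rightarrow> bool" where
  "dholds S e (Eq s t) = (deval e s = deval e t)"
| "dholds S e (Ls s t) = (deval e s < deval e t)"
| "dholds S e (Mem t) = (deval e t \<in> S)"
| "dholds S e (Ng \<phi>) = (\<not> dholds S e \<phi>)"
| "dholds S e (Cj \<phi> \<psi>) = (dholds S e \<phi> \<and> dholds S e \<psi>)"
| "dholds S e (Ex \<phi>) = (\<exists>n. dholds S (econs n e) \<phi>)"

primrec dren_trm :: "(nat \<Rightarrow> nat) \<Rightarrow> dtrm \<Rightarrow> dtrm" where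
  "dren_trm f (V i) = V (f i)"
| "dren_trm f Z = Z"
| "dren_trm f (Sc t) = Sc (dren_trm f t)"
| "dren_trm f (Ad s t) = Ad (dren_trm f s) (dren_trm f t)"
| "dren_trm f (Mu s t) = Mu (dren_trm f s) (dren_trm f t)"

definition lift_ren :: "(nat \<Rightarrow> nat) \<Rightarrow> nat \<Rightarrow> nat" where
  "lift_ren f = (\<lambda>i. case i of 0 \<Rightarrow> 0 | Suc j \<Rightarrow> Suc (f j))"

primrec dren :: "(nat \<Rightarrow> nat) \<Rightarrow> dfm \<Rightarrow> dfm" where
  "dren f (Eq s t) = Eq (dren_trm f s) (dren_trm f t)"
| "dren f (Ls s t) = Ls (dren_trm f s) (dren_trm f t)"
| "dren f (Mem t) = Mem (dren_trm f t)"
| "dren f (Ng \<phi>) = Ng (dren f \<phi>)"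
| "dren f (Cj \<phi> \<psi>) = Cj (dren f \<phi>) (dren f \<psi>)"
| "dren f (Ex \<phi>) = Ex (dren (lift_ren f) \<phi>)"

lemma deval_dren: "deval e (dren_trm f t) = deval (\<lambda>i. e (f i)) t"
  by (induct t) auto

lemma dholds_dren: "dholds S e (dren f \<phi>) = dholds S (\<lambda>i. e (f i)) \<phi>"
proof (induct \<phi> arbitrary: e f)
  case (Ex \<phi>)
  have "(\<lambda>i. econs n e (lift_ren f i)) = econs n (\<lambda>i. e (f i))" for n
    by (rule ext) (simp add: lift_ren_def econs_def split: nat.split)
  with Ex show ?case by simp
qed (auto simp: deval_dren)

definition definable :: "(nat set \<Rightarrow> (nat \<Rightarrow> nat) \<Rightarrow> bool) \<Rightarrow> bool" where
  "definable P \<longleftrightarrow> (\<exists>\<phi>. \<forall>S e. dholds S e \<phi> = P S e)"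

definition definable_fn :: "((nat \<Rightarrow> nat) \<Rightarrow> nat) \<Rightarrow> bool" where
  "definable_fn t \<longleftrightarrow> definable (\<lambda>S e. e 0 = t (\<lambda>i. e (Suc i)))"

lemma definable_cong:
  "definable P \<Longrightarrow> (\<And>S e. P S e = Q S e) \<Longrightarrow> definable Q"
  unfolding definable_def by auto

lemma definable_ren:
  "definable P \<Longrightarrow> definable (\<lambda>S e. P S (\<lambda>i. e (f i)))"
  unfolding definable_def by (metis dholds_dren)

lemma definable_not[definable_intros]:
  "definable P \<Longrightarrow> definable (\<lambda>S e. \<not> P S e)"
  unfolding definable_def by (metis dholds.simps(4))

lemma definable_and[definable_intros]:
  "definable P \<Longrightarrow> definable Q \<Longrightarrow> definable (\<lambda>S e. P S e \<and> Q S e)"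
  unfolding definable_def by (metis dholds.simps(5))

lemma definable_or[definable_intros]:
  "definable P \<Longrightarrow> definable Q \<Longrightarrow> definable (\<lambda>S e. P S e \<or> Q S e)"
  by (drule (1) definable_and[OF definable_not definable_not], drule definable_not)
    (erule definable_cong, simp)

lemma definable_imp[definable_intros]:
  "definable P \<Longrightarrow> definable Q \<Longrightarrow> definable (\<lambda>S e. P S e \<longrightarrow> Q S e)"
  by (drule definable_not, drule (1) definable_or) (erule definable_cong, simp)

lemma definable_iff[definable_intros]:
  "definable P \<Longrightarrow> definable Q \<Longrightarrow> definable (\<lambda>S e. P S e \<longleftrightarrow> Q S e)"
  by (frule (1) definable_imp, rotate_tac, frule (1) definable_imp, drule (1) definable_and)
    (erule definable_cong, blast)

lemma definable_ex[definable_intros]: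
  assumes "definable (\<lambda>S e. P S (e 0) (\<lambda>i. e (Suc i)))"
  shows "definable (\<lambda>S e. \<exists>n. P S n e)"
proof -
  obtain \<phi> where "\<forall>S e. dholds S e \<phi> = P S (e 0) (\<lambda>i. e (Suc i))"
    using assms unfolding definable_def by blast
  then have "\<forall>S e. dholds S e (Ex \<phi>) = (\<exists>n. P S n e)" by simp
  then show ?thesis unfolding definable_def by blast
qed

lemma definable_all[definable_intros]:
  "definable (\<lambda>S e. P S (e 0) (\<lambda>i. e (Suc i))) \<Longrightarrow> definable (\<lambda>S e. \<forall>n. P S n e)"
  by (drule definable_not, drule definable_ex, drule definable_not) (erule definable_cong, simp)

lemma definable_const[definable_intros]: "definable (\<lambda>S e. c)"
  unfolding definable_def
  by (cases c) (rule exI[of _ "Eq Z Z"], simp, rule exI[of _ "Ls Z Z"], simp)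

lemma definable_var_eq: "definable (\<lambda>S e. e i = e j)"
  unfolding definable_def by (rule exI[of _ "Eq (V i) (V j)"]) simp
lemma definable_var_zero: "definable (\<lambda>S e. e i = 0)"
  unfolding definable_def by (rule exI[of _ "Eq (V i) Z"]) simp
lemma definable_var_Suc: "definable (\<lambda>S e. e i = Suc (e j))"
  unfolding definable_def by (rule exI[of _ "Eq (V i) (Sc (V j))"]) simp
lemma definable_var_add: "definable (\<lambda>S e. e i = e j + e k)"
  unfolding definable_def by (rule exI[of _ "Eq (V i) (Ad (V j) (V k))"]) simp
lemma definable_var_mul: "definable (\<lambda>S e. e i = e j * e k)"
  unfolding definable_def by (rule exI[of _ "Eq (V i) (Mu (V j) (V k))"]) simp
lemma definable_var_less: "definable (\<lambda>S e. e i < e j)"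
  unfolding definable_def by (rule exI[of _ "Ls (V i) (V j)"]) simp
lemma definable_var_in: "definable (\<lambda>S e. e i \<in> S)"
  unfolding definable_def by (rule exI[of _ "Mem (V i)"]) simp

lemma definable_fn_ren:
  "definable_fn t \<Longrightarrow> definable_fn (\<lambda>e. t (\<lambda>i. e (f i)))"
  unfolding definable_fn_def
  by (drule definable_ren[where f = "lift_ren f"]) (simp add: lift_ren_def)

text \<open>The value of \<open>a\<close> is bound by an existential quantifier.\<close>
lemma definable_let:
  assumes "definable_fn a" and "definable (\<lambda>S e. Q S (e 0) (\<lambda>i. e (Suc i)))"
  shows "definable (\<lambda>S e. Q S (a e) e)"
proof -
  have "definable (\<lambda>S e. \<exists>n. n = a e \<and> Q S n e)"
    using assms unfolding definable_fn_def by (intro definable_ex definable_and) simp_all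
  then show ?thesis by (rule definable_cong) simp
qed

lemma definable_app3:
  assumes R: "definable (\<lambda>S e. R S (e 0) (e 1) (e 2))"
    and a: "definable_fn a" and b: "definable_fn b" and c: "definable_fn c"
  shows "definable (\<lambda>S e. R S (a e) (b e) (c e))"
proof -
  have "definable (\<lambda>S e. R S (e 2) (e 1) (e 0))"
    using definable_ren[OF R, of "\<lambda>i. if i = 0 then 2 else if i = 1 then 1 else 0"]
    by (simp add: numeral_eq_Suc)
  then have "definable (\<lambda>S e. R S (e 1) (e 0) (c (\<lambda>i. e (Suc (Suc i)))))"
    using definable_let[OF definable_fn_ren[OF c], of "\<lambda>S z e. R S (e 1) (e 0) z"]
    by (simp add: numeral_eq_Suc)
  then have "definable (\<lambda>S e. R S (e 0) (b (\<lambda>i. e (Suc i))) (c (\<lambda>i. e (Suc i))))"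
    using definable_let[OF definable_fn_ren[OF b], of "\<lambda>S y e. R S (e 0) y (c (\<lambda>i. e (Suc i)))"]
    by simp
  then show ?thesis
    using definable_let[OF a, of "\<lambda>S x e. R S x (b e) (c e)"] by simp
qed

lemma definable_app1:
  "definable (\<lambda>S e. R S (e 0)) \<Longrightarrow> definable_fn a \<Longrightarrow> definable (\<lambda>S e. R S (a e))"
  by (rule definable_let[where Q = "\<lambda>S x e. R S x", simplified])

lemma definable_fn_var[definable_intros]: "definable_fn (\<lambda>e. e i)"
  unfolding definable_fn_def using definable_var_eq[of 0 "Suc i"] by simp

lemma definable_fn_comp:
  assumes f: "definable (\<lambda>S e. e 0 = f (e 1) (e 2))" and "definable_fn a" "definable_fn b"
  shows "definable_fn (\<lambda>e. f (a e) (b e))"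
  unfolding definable_fn_def
  by (rule definable_app3[OF f definable_fn_var]) (use assms in \<open>simp_all add: definable_fn_ren\<close>)

lemma definable_fn_Suc[definable_intros]:
  "definable_fn a \<Longrightarrow> definable_fn (\<lambda>e. Suc (a e))"
  using definable_fn_comp[where f = "\<lambda>x y. Suc x", OF definable_var_Suc] by blast

lemma definable_fn_const[definable_intros]: "definable_fn (\<lambda>e. c)"
proof (induct c)
  case 0
  show ?case unfolding definable_fn_def using definable_var_zero[of 0] by simp
qed (rule definable_fn_Suc)

lemma definable_fn_add[definable_intros]:
  "definable_fn a \<Longrightarrow> definable_fn b \<Longrightarrow> definable_fn (\<lambda>e. a e + b e)"
  by (rule definable_fn_comp[OF definable_var_add[of 0 1 2]])

lemma definable_fn_mul[definable_intros]:
  "definable_fn a \<Longrightarrow> definable_fn b \<Longrightarrow> definable_fn (\<lambda>e. a e * b e)"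
  by (rule definable_fn_comp[OF definable_var_mul[of 0 1 2]])

lemma definable_eq[definable_intros]:
  "definable_fn a \<Longrightarrow> definable_fn b \<Longrightarrow> definable (\<lambda>S e. a e = b e)"
  by (rule definable_app3[where R = "\<lambda>S x y z. x = y", OF definable_var_eq]) simp_all

lemma definable_less[definable_intros]:
  "definable_fn a \<Longrightarrow> definable_fn b \<Longrightarrow> definable (\<lambda>S e. a e < b e)"
  by (rule definable_app3[where R = "\<lambda>S x y z. x < y", OF definable_var_less]) simp_all

lemma definable_le[definable_intros]:
  "definable_fn a \<Longrightarrow> definable_fn b \<Longrightarrow> definable (\<lambda>S e. a e \<le> b e)"
proof -
  assume "definable_fn a" "definable_fn b"
  then have "definable (\<lambda>S e. a e < Suc (b e))" by (intro definable_less definable_fn_Suc)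
  then show ?thesis by (rule definable_cong) (simp add: less_Suc_eq_le)
qed

lemma definable_mem[definable_intros]:
  "definable_fn a \<Longrightarrow> definable (\<lambda>S e. a e \<in> S)"
  by (rule definable_app1[OF definable_var_in])

lemma definable_prod_encode_graph: "definable (\<lambda>S e. e 0 = prod_encode (e 1, e 2))"
proof -
  have "2 * z = (x + y) * Suc (x + y) + 2 * x \<longleftrightarrow> z = prod_encode (x, y)" for x y z :: nat
  proof -
    have "2 * triangle (x + y) = (x + y) * Suc (x + y)" by (simp add: triangle_def)
    then show ?thesis by (simp add: prod_encode_def) arith
  qed
  moreover have "definable (\<lambda>S e. 2 * e 0 = (e 1 + e 2) * Suc (e 1 + e 2) + 2 * e 1)"
    by (intro definable_intros)
  ultimately show ?thesis by (auto elim!: definable_cong)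
qed

lemma definable_fn_prod_encode[definable_intros]:
  "definable_fn a \<Longrightarrow> definable_fn b \<Longrightarrow> definable_fn (\<lambda>e. prod_encode (a e, b e))"
  by (rule definable_fn_comp[where f = "\<lambda>x y. prod_encode (x, y)", OF definable_prod_encode_graph])

lemma definable_minus_graph: "definable (\<lambda>S e. e 0 = e 1 - e 2)"
proof -
  have "definable (\<lambda>S e. (e 1 \<le> e 2 \<and> e 0 = 0) \<or> e 1 = e 2 + e 0)"
    by (intro definable_intros)
  then show ?thesis by (rule definable_cong) arith
qed

lemma definable_fn_minus[definable_intros]:
  "definable_fn a \<Longrightarrow> definable_fn b \<Longrightarrow> definable_fn (\<lambda>e. a e - b e)"
  by (rule definable_fn_comp[where f = "\<lambda>x y. x - y", OF definable_minus_graph])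

lemma definable_dvd[definable_intros]:
  assumes "definable_fn a" "definable_fn b"
  shows "definable (\<lambda>S e. a e dvd b e)"
proof -
  have "definable (\<lambda>S e. \<exists>k. b e = a e * k)"
    by (intro definable_ex definable_eq definable_fn_mul definable_fn_var
        definable_fn_ren[OF assms(1)] definable_fn_ren[OF assms(2)])
  then show ?thesis by (rule definable_cong) (auto simp: dvd_def)
qed

lemma definable_odd_var: "definable (\<lambda>S e. odd (e 0))"
proof -
  have "definable (\<lambda>S e. \<exists>j. e 0 = 2 * j + 1)" by (intro definable_intros)
  then show ?thesis by (rule definable_cong) (auto elim: oddE)
qed

lemma definable_odd[definable_intros]:
  "definable_fn a \<Longrightarrow> definable (\<lambda>S e. odd (a e))"
  using definable_app1[where R = "\<lambda>S x. odd x", OF definable_odd_var] by simp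

primrec dtrm_of_aterm :: "(nat \<Rightarrow> nat) \<Rightarrow> aterm \<Rightarrow> dtrm" where
  "dtrm_of_aterm G (AV x) = V (G x)"
| "dtrm_of_aterm G AZ = Z"
| "dtrm_of_aterm G (AS t) = Sc (dtrm_of_aterm G t)"
| "dtrm_of_aterm G (AAdd s t) = Ad (dtrm_of_aterm G s) (dtrm_of_aterm G t)"
| "dtrm_of_aterm G (AMul s t) = Mu (dtrm_of_aterm G s) (dtrm_of_aterm G t)"

primrec dfm_of_aform :: "(nat \<Rightarrow> nat) \<Rightarrow> aform \<Rightarrow> dfm" where
  "dfm_of_aform G (AEq s t) = Eq (dtrm_of_aterm G s) (dtrm_of_aterm G t)"
| "dfm_of_aform G (ALt s t) = Ls (dtrm_of_aterm G s) (dtrm_of_aterm G t)"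
| "dfm_of_aform G (AIn t) = Mem (dtrm_of_aterm G t)"
| "dfm_of_aform G (ANot \<phi>) = Ng (dfm_of_aform G \<phi>)"
| "dfm_of_aform G (AAnd \<phi> \<psi>) = Cj (dfm_of_aform G \<phi>) (dfm_of_aform G \<psi>)"
| "dfm_of_aform G (AEx x \<phi>) = Ex (dfm_of_aform (\<lambda>y. if y = x then 0 else Suc (G y)) \<phi>)"

lemma deval_dtrm_of_aterm: "deval d (dtrm_of_aterm G t) = aeval (\<lambda>y. d (G y)) t"
  by (induct t) auto

lemma dholds_dfm_of_aform:
  "dholds S d (dfm_of_aform G \<phi>) = aholds S (\<lambda>y. d (G y)) \<phi>"
proof (induct \<phi> arbitrary: G d)
  case (AEx x \<phi>)
  have "(\<lambda>y. econs n d (if y = x then 0 else Suc (G y))) = (\<lambda>y. d (G y))(x := n)" for n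
    by (rule ext) simp
  then show ?case using AEx by simp
qed (auto simp: deval_dtrm_of_aterm)

lemma first_order_aholds:
  "first_order \<phi> \<Longrightarrow> aholds S e \<phi> = aholds S' e \<phi>"
  by (induct \<phi> arbitrary: e) auto

lemma definable_aform:
  "first_order \<phi> \<Longrightarrow> definable (\<lambda>S e. aholds {} (\<lambda>_. e 0) \<phi>)"
  unfolding definable_def
  by (rule exI[of _ "dfm_of_aform (\<lambda>_. 0) \<phi>"]) (simp add: dholds_dfm_of_aform, metis first_order_aholds)

primrec aterm_of_dtrm :: "nat \<Rightarrow> dtrm \<Rightarrow> aterm" where
  "aterm_of_dtrm d (V i) = (if i < d then AV (d - 1 - i) else AZ)"
| "aterm_of_dtrm d Z = AZ"
| "aterm_of_dtrm d (Sc t) = AS (aterm_of_dtrm d t)"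
| "aterm_of_dtrm d (Ad s t) = AAdd (aterm_of_dtrm d s) (aterm_of_dtrm d t)"
| "aterm_of_dtrm d (Mu s t) = AMul (aterm_of_dtrm d s) (aterm_of_dtrm d t)"

primrec aform_of_dfm :: "nat \<Rightarrow> dfm \<Rightarrow> aform" where
  "aform_of_dfm d (Eq s t) = AEq (aterm_of_dtrm d s) (aterm_of_dtrm d t)"
| "aform_of_dfm d (Ls s t) = ALt (aterm_of_dtrm d s) (aterm_of_dtrm d t)"
| "aform_of_dfm d (Mem t) = AIn (aterm_of_dtrm d t)"
| "aform_of_dfm d (Ng \<phi>) = ANot (aform_of_dfm d \<phi>)"
| "aform_of_dfm d (Cj \<phi> \<psi>) = AAnd (aform_of_dfm d \<phi>) (aform_of_dfm d \<psi>)"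
| "aform_of_dfm d (Ex \<phi>) = AEx d (aform_of_dfm (Suc d) \<phi>)"

text \<open>At binding depth \<open>d\<close> the de Bruijn index \<open>i < d\<close> becomes the named variable
  \<open>d - 1 - i\<close>; indices \<open>\<ge> d\<close> are free and are read as 0.\<close>
lemma deval_aterm_of_dtrm:
  "(\<forall>i<d. g i = e (d - 1 - i)) \<Longrightarrow> (\<forall>i\<ge>d. g i = 0) \<Longrightarrow> deval g t = aeval e (aterm_of_dtrm d t)"
  by (induct t) auto

lemma dholds_aform_of_dfm:
  "(\<forall>i<d. g i = e (d - 1 - i)) \<Longrightarrow> (\<forall>i\<ge>d. g i = 0) \<Longrightarrow> dholds S g \<phi> = aholds S e (aform_of_dfm d \<phi>)"
proof (induct \<phi> arbitrary: d g e)
  case (Ex \<phi>)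
  have "dholds S (econs n g) \<phi> = aholds S (e(d := n)) (aform_of_dfm (Suc d) \<phi>)" for n
  proof (rule Ex(1))
    show "\<forall>i<Suc d. econs n g i = (e(d := n)) (Suc d - 1 - i)"
      using Ex(2) by (auto simp: econs_def split: nat.split)
    show "\<forall>i\<ge>Suc d. econs n g i = 0"
      using Ex(3) by (auto simp: econs_def split: nat.split)
  qed
  then show ?case by simp
qed (auto simp: deval_aterm_of_dtrm)

lemma atfv_aterm_of_dtrm: "atfv (aterm_of_dtrm d t) \<subseteq> {..<d}"
  by (induct t) auto

lemma afv_aform_of_dfm: "afv (aform_of_dfm d \<phi>) \<subseteq> {..<d}"
proof (induct \<phi> arbitrary: d)
  case (Ex \<phi>)
  then show ?case by (force simp: less_Suc_eq)
qed (use atfv_aterm_of_dtrm in auto)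

lemma definable_closed_aform:
  assumes "definable (\<lambda>S e. P S)"
  shows "\<exists>\<Phi>. afv \<Phi> = {} \<and> (\<forall>S. aholds S (\<lambda>_. 0) \<Phi> = P S)"
proof -
  obtain \<phi> where h: "\<forall>S e. dholds S e \<phi> = P S" using assms unfolding definable_def by blast
  have "afv (aform_of_dfm 0 \<phi>) = {}" using afv_aform_of_dfm[of 0 \<phi>] by auto
  moreover have "aholds S (\<lambda>_. 0) (aform_of_dfm 0 \<phi>) = P S" for S
    using dholds_aform_of_dfm[of 0 "\<lambda>_. 0" "\<lambda>_. 0" S \<phi>] h by simp
  ultimately show ?thesis by blast
qed

lemma delta0_first_order: "delta0 \<phi> \<Longrightarrow> first_order \<phi>"
  by (induct rule: delta0.induct) auto

lemma sigma1_first_order: "sigma1 \<phi> \<Longrightarrow> first_order \<phi>"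
  by (induct rule: sigma1.induct) (auto simp: delta0_first_order)

lemma definable_mem_first_order:
  assumes "first_order \<phi>" "\<forall>n. n \<in> A \<longleftrightarrow> aholds {} (\<lambda>_. n) \<phi>" "definable_fn a"
  shows "definable (\<lambda>S e. a e \<in> A)"
proof -
  have "definable (\<lambda>S e. e 0 \<in> A)"
    using definable_aform[OF assms(1)] by (rule definable_cong) (simp add: assms(2))
  then show ?thesis by (rule definable_app1[OF _ assms(3)])
qed

lemma definable_mem_ce:
  "ce_set A \<Longrightarrow> definable_fn a \<Longrightarrow> definable (\<lambda>S e. a e \<in> A)"
  unfolding ce_set_def using definable_mem_first_order sigma1_first_order by blast

lemma definable_mem_arithmetical:
  "arithmetical_set A \<Longrightarrow> definable_fn a \<Longrightarrow> definable (\<lambda>S e. a e \<in> A)"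
  unfolding arithmetical_set_def using definable_mem_first_order by blast

section \<open>Coding finite sets and finitely generated sets\<close>

text \<open>Goedel's Chinese-remainder coding: for \<open>d = M!\<close> the moduli \<open>1 + (p + 1) d\<close>, \<open>p < M\<close>,
  are pairwise coprime, so any finite set below \<open>M\<close> is the set of \<open>p\<close> whose modulus divides
  the product of the moduli of its elements.\<close>

definition crt_mem :: "nat \<Rightarrow> nat \<Rightarrow> nat \<Rightarrow> nat \<Rightarrow> bool" where
  "crt_mem c d M p \<longleftrightarrow> p < M \<and> (1 + (p + 1) * d) dvd c"

lemma definable_crt_mem[definable_intros]:
  "definable_fn c \<Longrightarrow> definable_fn d \<Longrightarrow> definable_fn M \<Longrightarrow> definable_fn p \<Longrightarrow> definable (\<lambda>S e. crt_mem (c e) (d e) (M e) (p e))"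
  unfolding crt_mem_def by (intro definable_intros)

lemma coprime_crt_moduli_less:
  fixes d M a p :: nat
  assumes dv: "\<And>k. 0 < k \<Longrightarrow> k \<le> M \<Longrightarrow> k dvd d" and "a < M" "p < a"
  shows "coprime (1 + (a + 1) * d) (1 + (p + 1) * d)"
proof -
  let ?u = "1 + (a + 1) * d" and ?v = "1 + (p + 1) * d"
  define g where "g = gcd ?u ?v"
  have gu: "g dvd ?u" and gv: "g dvd ?v" by (simp_all add: g_def)
  have eq2: "(a + 1) * ?v - (p + 1) * ?u = a - p"
    by (simp add: algebra_simps)
  have "g dvd (a + 1) * ?v - (p + 1) * ?u"
    by (rule dvd_diff_nat; rule dvd_mult; fact)
  then have "g dvd a - p" using eq2 by simp
  moreover have "a - p > 0" using assms by simp
  ultimately have "g \<le> a - p" by (simp add: dvd_imp_le)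
  moreover have "g > 0" by (simp add: g_def)
  ultimately have "g dvd d" using dv assms by simp
  then have "g dvd (a + 1) * d" by simp
  with gu have "g dvd 1"
    by (metis dvd_add_left_iff add.commute)
  then show ?thesis unfolding g_def by (simp add: coprime_iff_gcd_eq_1)
qed

lemma coprime_crt_moduli:
  fixes d M a p :: nat
  assumes dv: "\<And>k. 0 < k \<Longrightarrow> k \<le> M \<Longrightarrow> k dvd d" and "a < M" "p < M" "a \<noteq> p"
  shows "coprime (1 + (p + 1) * d) (1 + (a + 1) * d)"
proof (cases "p < a")
  case True
  then show ?thesis using coprime_crt_moduli_less[OF dv assms(2) True] by (simp add: coprime_commute)
next
  case False
  then have "a < p" using assms by simp
  then show ?thesis using coprime_crt_moduli_less[OF dv assms(3) \<open>a < p\<close>] by simp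
qed

lemma crt_code_exists:
  assumes "finite A"
  shows "\<exists>c d M. \<forall>p. crt_mem c d M p \<longleftrightarrow> p \<in> A"
proof -
  define M where "M = Suc (Max (insert 0 A))"
  define d :: nat where "d = fact M"
  define c where "c = (\<Prod>a\<in>A. 1 + (a + 1) * d)"
  have AM: "a < M" if "a \<in> A" for a
    using assms that unfolding M_def by (simp add: le_imp_less_Suc)
  have dv: "\<And>k. 0 < k \<Longrightarrow> k \<le> M \<Longrightarrow> k dvd d" unfolding d_def by (simp add: dvd_fact)
  have dpos: "d > 0" unfolding d_def by simp
  have "crt_mem c d M p \<longleftrightarrow> p \<in> A" for p
  proof
    assume "p \<in> A"
    then show "crt_mem c d M p" unfolding crt_mem_def c_def using AM assms
      by (auto intro: dvd_prodI)
  next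
    assume m: "crt_mem c d M p"
    show "p \<in> A"
    proof (rule ccontr)
      assume np: "p \<notin> A"
      have "coprime (1 + (p + 1) * d) c" unfolding c_def
        by (rule prod_coprime_right, rule coprime_crt_moduli[OF dv]) (use m np AM in \<open>auto simp: crt_mem_def\<close>)
      moreover have "(1 + (p + 1) * d) dvd c" using m by (simp add: crt_mem_def)
      ultimately have "is_unit (1 + (p + 1) * d)" using coprime_absorb_left by blast
      then show False using dpos by simp
    qed
  qed
  then show ?thesis by blast
qed

lemma finite_crt_mem: "finite {p. crt_mem c d M p}"
  by (rule finite_subset[of _ "{..<M}"]) (auto simp: crt_mem_def)

text \<open>An element is generated by a rule if it occurs in a finite set of stage-labelled elements,
  each justified by the rule from elements of earlier stages. Such a finite set has a code, so
  the set generated by a definable rule is definable.\<close>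

definition staged :: "(nat set \<Rightarrow> (nat \<Rightarrow> bool) \<Rightarrow> nat \<Rightarrow> bool) \<Rightarrow> nat set \<Rightarrow> (nat \<times> nat) set \<Rightarrow> bool" where
  "staged Rl S F \<longleftrightarrow> (\<forall>i v. (i, v) \<in> F \<longrightarrow> Rl S (\<lambda>w. \<exists>j<i. (j, w) \<in> F) v)"

definition generated :: "(nat set \<Rightarrow> (nat \<Rightarrow> bool) \<Rightarrow> nat \<Rightarrow> bool) \<Rightarrow> nat set \<Rightarrow> nat \<Rightarrow> bool" where
  "generated Rl S x \<longleftrightarrow> (\<exists>F i. finite F \<and> staged Rl S F \<and> (i, x) \<in> F)"

definition mono_rule :: "(nat set \<Rightarrow> (nat \<Rightarrow> bool) \<Rightarrow> nat \<Rightarrow> bool) \<Rightarrow> bool" where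
  "mono_rule Rl \<longleftrightarrow> (\<forall>S X Y v. (\<forall>w. X w \<longrightarrow> Y w) \<longrightarrow> Rl S X v \<longrightarrow> Rl S Y v)"

lemma generated_induct:
  assumes step: "\<And>X v. Rl S X v \<Longrightarrow> (\<And>w. X w \<Longrightarrow> Q w) \<Longrightarrow> Q v"
    and "generated Rl S x"
  shows "Q x"
proof -
  obtain F i where F: "finite F" "staged Rl S F" "(i, x) \<in> F"
    using assms(2) unfolding generated_def by blast
  have "\<forall>v. (i, v) \<in> F \<longrightarrow> Q v" for i
  proof (induct i rule: less_induct)
    case (less i)
    show ?case
    proof (intro allI impI)
      fix v assume "(i, v) \<in> F"
      then have "Rl S (\<lambda>w. \<exists>j<i. (j, w) \<in> F) v" using F(2) unfolding staged_def by blast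
      then show "Q v" by (rule step) (use less in blast)
    qed
  qed
  then show ?thesis using F(3) by blast
qed

lemma staged_UN:
  assumes mono: "mono_rule Rl" and F: "\<And>w. w \<in> A \<Longrightarrow> staged Rl S (F w)"
  shows "staged Rl S (\<Union>w\<in>A. F w)"
  unfolding staged_def
proof (intro allI impI)
  fix i u assume "(i, u) \<in> (\<Union>w\<in>A. F w)"
  then obtain w where w: "w \<in> A" "(i, u) \<in> F w" by blast
  then have "Rl S (\<lambda>x. \<exists>j<i. (j, x) \<in> F w) u" using F unfolding staged_def by blast
  then show "Rl S (\<lambda>x. \<exists>j<i. (j, x) \<in> (\<Union>w\<in>A. F w)) u"
    by (rule mono[unfolded mono_rule_def, rule_format, rotated]) (use w in blast)
qed

lemma staged_insert:
  assumes mono: "mono_rule Rl" and F: "staged Rl S F" and below: "\<And>j u. (j, u) \<in> F \<Longrightarrow> j < N"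
    and r: "Rl S (\<lambda>w. \<exists>j<N. (j, w) \<in> F) v"
  shows "staged Rl S (insert (N, v) F)"
  unfolding staged_def
proof (intro allI impI)
  fix i u assume iu: "(i, u) \<in> insert (N, v) F"
  show "Rl S (\<lambda>w. \<exists>j<i. (j, w) \<in> insert (N, v) F) u"
  proof (cases "(i, u) \<in> F")
    case True
    then have "Rl S (\<lambda>w. \<exists>j<i. (j, w) \<in> F) u" using F unfolding staged_def by blast
    then show ?thesis by (rule mono[unfolded mono_rule_def, rule_format, rotated]) blast
  next
    case False
    then have "i = N" "u = v" using iu by auto
    with r show ?thesis by (auto elim!: mono[unfolded mono_rule_def, rule_format, rotated])
  qed
qed

lemma generated_closed:
  assumes mono: "mono_rule Rl" and fin: "finite A" and all: "\<forall>w\<in>A. generated Rl S w"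
    and r: "Rl S (\<lambda>w. w \<in> A) v"
  shows "generated Rl S v"
proof -
  obtain G i where G: "\<And>w. w \<in> A \<Longrightarrow> finite (G w) \<and> staged Rl S (G w) \<and> (i w, w) \<in> G w"
    using all unfolding generated_def by metis
  define F where "F = (\<Union>w\<in>A. G w)"
  define N where "N = Suc (Max (insert 0 (fst ` F)))"
  have "finite F" unfolding F_def using fin G by auto
  then have below: "j < N" if "(j, u) \<in> F" for j u
    using that unfolding N_def by (metis Max_ge finite_imageI finite_insert fst_conv image_eqI
        insertI2 le_imp_less_Suc)
  have "staged Rl S (insert (N, v) F)"
  proof (rule staged_insert[OF mono _ below])
    show "staged Rl S F" unfolding F_def using G by (blast intro: staged_UN[OF mono])
    show "Rl S (\<lambda>w. \<exists>j<N. (j, w) \<in> F) v"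
      using r by (rule mono[unfolded mono_rule_def, rule_format, rotated])
        (use G below in \<open>force simp: F_def\<close>)
  qed
  with \<open>finite F\<close> show ?thesis unfolding generated_def by blast
qed

lemma generated_rule:
  assumes "mono_rule Rl" "Rl S (\<lambda>w. w \<in> set ws) v" "\<forall>w\<in>set ws. generated Rl S w"
  shows "generated Rl S v"
  using generated_closed[OF assms(1) _ assms(3) assms(2)] by simp

lemma generated_crt_iff:
  "generated Rl S x \<longleftrightarrow> (\<exists>c d M i. crt_mem c d M (prod_encode (i, x)) \<and>
     (\<forall>j v. crt_mem c d M (prod_encode (j, v)) \<longrightarrow> Rl S (\<lambda>w. \<exists>k<j. crt_mem c d M (prod_encode (k, w))) v))"
proof
  assume "generated Rl S x"
  then obtain F i where F: "finite F" "staged Rl S F" "(i, x) \<in> F" unfolding generated_def by blast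
  obtain c d M where cd: "\<forall>p. crt_mem c d M p \<longleftrightarrow> p \<in> prod_encode ` F"
    using crt_code_exists[of "prod_encode ` F"] F(1) by blast
  have m: "crt_mem c d M (prod_encode (j, v)) \<longleftrightarrow> (j, v) \<in> F" for j v
    using cd by (auto dest: inj_onD[OF inj_prod_encode])
  show "\<exists>c d M i. crt_mem c d M (prod_encode (i, x)) \<and>
     (\<forall>j v. crt_mem c d M (prod_encode (j, v)) \<longrightarrow> Rl S (\<lambda>w. \<exists>k<j. crt_mem c d M (prod_encode (k, w))) v)"
    apply (rule exI[of _ c], rule exI[of _ d], rule exI[of _ M], rule exI[of _ i])
    using F(2,3) unfolding staged_def m by blast
next
  assume "\<exists>c d M i. crt_mem c d M (prod_encode (i, x)) \<and>
     (\<forall>j v. crt_mem c d M (prod_encode (j, v)) \<longrightarrow> Rl S (\<lambda>w. \<exists>k<j. crt_mem c d M (prod_encode (k, w))) v)"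
  then obtain c d M i where h: "crt_mem c d M (prod_encode (i, x))"
    "\<forall>j v. crt_mem c d M (prod_encode (j, v)) \<longrightarrow> Rl S (\<lambda>w. \<exists>k<j. crt_mem c d M (prod_encode (k, w))) v"
    by blast
  define F where "F = {(j, v). crt_mem c d M (prod_encode (j, v))}"
  have "F \<subseteq> prod_decode ` {p. crt_mem c d M p}"
    unfolding F_def by (auto intro!: image_eqI[where x = "prod_encode _"])
  then have "finite F" using finite_crt_mem finite_surj by blast
  moreover have "staged Rl S F" unfolding staged_def F_def using h(2) by simp
  moreover have "(i, x) \<in> F" unfolding F_def using h(1) by simp
  ultimately show "generated Rl S x" unfolding generated_def by blast
qed

lemma definable_generated_var:
  assumes "definable (\<lambda>S e. Rl S (\<lambda>w. \<exists>k<e 0. crt_mem (e 1) (e 2) (e 3) (prod_encode (k, w))) (e 4))"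
  shows "definable (\<lambda>S e. generated Rl S (e 0))"
proof -
  have r: "definable (\<lambda>S e. Rl S (\<lambda>w. \<exists>k<e (Suc 0). crt_mem (e (Suc (Suc (Suc (Suc (Suc 0))))))
      (e (Suc (Suc (Suc (Suc 0))))) (e (Suc (Suc (Suc 0)))) (prod_encode (k, w))) (e 0))"
    using definable_ren[OF assms, where f = "\<lambda>n. if n = 0 then 1 else if n = 1 then 5 else if n = 2 then 4
       else if n = 3 then 3 else 0"]
    by (simp add: numeral_eq_Suc)
  have "definable (\<lambda>S e. \<exists>c d M i. crt_mem c d M (prod_encode (i, e 0)) \<and>
     (\<forall>j v. crt_mem c d M (prod_encode (j, v)) \<longrightarrow> Rl S (\<lambda>w. \<exists>k<j. crt_mem c d M (prod_encode (k, w))) v))"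
    by (intro definable_intros) (rule r)
  then show ?thesis by (rule definable_cong) (simp add: generated_crt_iff)
qed

lemma definable_generated:
  "definable (\<lambda>S e. Rl S (\<lambda>w. \<exists>k<e 0. crt_mem (e 1) (e 2) (e 3) (prod_encode (k, w))) (e 4)) \<Longrightarrow>
   definable_fn a \<Longrightarrow> definable (\<lambda>S e. generated Rl S (a e))"
  by (rule definable_app1[OF definable_generated_var])

abbreviation pe :: "nat \<Rightarrow> nat \<Rightarrow> nat" where "pe a b \<equiv> prod_encode (a, b)"

abbreviation enc_trms :: "trm list \<Rightarrow> nat" where "enc_trms ts \<equiv> list_encode (map enc_trm ts)"

lemma enc_trm_inj: "enc_trm s = enc_trm t \<longleftrightarrow> s = t"
proof (induct s arbitrary: t)
  case (TVar x)
  then show ?case by (cases t) auto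
next
  case (TFn f ts)
  show ?case
  proof (cases t)
    case (TFn g us)
    have "\<And>us. map enc_trm ts = map enc_trm us \<Longrightarrow> ts = us"
      using TFn.hyps
    proof (induct ts)
      case (Cons a ts)
      then show ?case by (cases us) auto
    qed simp
    then show ?thesis using TFn by (auto simp: list_encode_eq)
  qed auto
next
  case (TCst c)
  then show ?case by (cases t) auto
qed

lemma map_enc_trm_inj: "map enc_trm ts = map enc_trm us \<longleftrightarrow> ts = us"
  by (rule inj_map_eq_map) (auto simp: inj_def enc_trm_inj)

lemma enc_trms_inj: "enc_trms ts = enc_trms us \<longleftrightarrow> ts = us"
  by (simp add: list_encode_eq map_enc_trm_inj)

lemma enc_fm_inj: "enc_fm \<phi> = enc_fm \<psi> \<longleftrightarrow> \<phi> = \<psi>"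
  by (induct \<phi> arbitrary: \<psi>; case_tac \<psi>; auto simp: enc_trm_inj enc_trms_inj list_encode_eq map_enc_trm_inj)

lemma dec_trm[simp]:
  "enc_trm t = pe 0 y \<longleftrightarrow> t = TVar y"
  "enc_trm t = pe 2 c \<longleftrightarrow> t = TCst c"
  "enc_trm t = pe 1 (pe f l) \<longleftrightarrow> (\<exists>ts. t = TFn f ts \<and> l = enc_trms ts)"
  "pe 0 y = enc_trm t \<longleftrightarrow> t = TVar y"
  "pe 2 c = enc_trm t \<longleftrightarrow> t = TCst c"
  "pe 1 (pe f l) = enc_trm t \<longleftrightarrow> (\<exists>ts. t = TFn f ts \<and> l = enc_trms ts)"
  by (cases t; auto)+

lemma dec_trm1[simp]:
  "enc_trm t = pe (Suc 0) (pe f l) \<longleftrightarrow> (\<exists>ts. t = TFn f ts \<and> l = enc_trms ts)"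
  "pe (Suc 0) (pe f l) = enc_trm t \<longleftrightarrow> (\<exists>ts. t = TFn f ts \<and> l = enc_trms ts)"
  by (cases t; auto)+

lemma dec_list[simp]:
  "enc_trms ts = 0 \<longleftrightarrow> ts = []"
  "enc_trms ts = Suc (pe a l) \<longleftrightarrow> (\<exists>t us. ts = t # us \<and> a = enc_trm t \<and> l = enc_trms us)"
  "0 = enc_trms ts \<longleftrightarrow> ts = []"
  "Suc (pe a l) = enc_trms ts \<longleftrightarrow> (\<exists>t us. ts = t # us \<and> a = enc_trm t \<and> l = enc_trms us)"
  by (cases ts; auto)+

lemma dec_fm[simp]:
  "enc_fm \<phi> = pe 0 (pe s u) \<longleftrightarrow> (\<exists>a b. \<phi> = FDist a b \<and> s = enc_trm a \<and> u = enc_trm b)"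
  "enc_fm \<phi> = pe 1 (pe P l) \<longleftrightarrow> (\<exists>ts. \<phi> = FPred P ts \<and> l = enc_trms ts)"
  "enc_fm \<phi> = pe 2 p \<longleftrightarrow> (\<exists>\<psi>. \<phi> = FNeg \<psi> \<and> p = enc_fm \<psi>)"
  "enc_fm \<phi> = pe 3 p \<longleftrightarrow> (\<exists>\<psi>. \<phi> = FHalf \<psi> \<and> p = enc_fm \<psi>)"
  "enc_fm \<phi> = pe 4 (pe p q) \<longleftrightarrow> (\<exists>\<psi> \<chi>. \<phi> = FMinus \<psi> \<chi> \<and> p = enc_fm \<psi> \<and> q = enc_fm \<chi>)"
  "enc_fm \<phi> = pe 5 (pe x p) \<longleftrightarrow> (\<exists>\<psi>. \<phi> = FSup x \<psi> \<and> p = enc_fm \<psi>)"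
  "pe 0 (pe s u) = enc_fm \<phi> \<longleftrightarrow> (\<exists>a b. \<phi> = FDist a b \<and> s = enc_trm a \<and> u = enc_trm b)"
  "pe 1 (pe P l) = enc_fm \<phi> \<longleftrightarrow> (\<exists>ts. \<phi> = FPred P ts \<and> l = enc_trms ts)"
  "pe 2 p = enc_fm \<phi> \<longleftrightarrow> (\<exists>\<psi>. \<phi> = FNeg \<psi> \<and> p = enc_fm \<psi>)"
  "pe 3 p = enc_fm \<phi> \<longleftrightarrow> (\<exists>\<psi>. \<phi> = FHalf \<psi> \<and> p = enc_fm \<psi>)"
  "pe 4 (pe p q) = enc_fm \<phi> \<longleftrightarrow> (\<exists>\<psi> \<chi>. \<phi> = FMinus \<psi> \<chi> \<and> p = enc_fm \<psi> \<and> q = enc_fm \<chi>)"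
  "pe 5 (pe x p) = enc_fm \<phi> \<longleftrightarrow> (\<exists>\<psi>. \<phi> = FSup x \<psi> \<and> p = enc_fm \<psi>)"
  by (cases \<phi>; auto)+

lemma dec_fm1[simp]:
  "enc_fm \<phi> = pe (Suc 0) (pe P l) \<longleftrightarrow> (\<exists>ts. \<phi> = FPred P ts \<and> l = enc_trms ts)"
  "pe (Suc 0) (pe P l) = enc_fm \<phi> \<longleftrightarrow> (\<exists>ts. \<phi> = FPred P ts \<and> l = enc_trms ts)"
  by (cases \<phi>; auto)+

lemma mono_ruleI:
  assumes "\<And>S X Y v. (\<And>w. X w \<longrightarrow> Y w) \<Longrightarrow> Rl S X v \<longrightarrow> Rl S Y v"
  shows "mono_rule Rl"
  using assms unfolding mono_rule_def by blast

definition pow2_rule :: "nat set \<Rightarrow> (nat \<Rightarrow> bool) \<Rightarrow> nat \<Rightarrow> bool" where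
  "pow2_rule S X v \<longleftrightarrow> v = pe 0 1 \<or> (\<exists>m p. v = pe (Suc m) (2 * p) \<and> X (pe m p))"

lemma mono_pow2_rule: "mono_rule pow2_rule"
  by (rule mono_ruleI, unfold pow2_rule_def, intro conj_mono disj_mono ex_mono imp_refl; assumption)

lemma pow2_rule_sound: "generated pow2_rule S v \<Longrightarrow> \<exists>m. v = pe m (2 ^ m)"
proof (erule generated_induct[rotated])
  fix X v assume r: "pow2_rule S X v" and ih: "\<And>w. X w \<Longrightarrow> \<exists>m. w = pe m (2 ^ m)"
  from r show "\<exists>m. v = pe m (2 ^ m)" unfolding pow2_rule_def by (auto dest!: ih)
qed

lemma pow2_rule_complete: "generated pow2_rule S (pe m (2 ^ m))"
proof (induct m)
  case 0
  show ?case by (rule generated_rule[OF mono_pow2_rule, where ws = "[]"]) (auto simp: pow2_rule_def)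
next
  case (Suc m)
  show ?case
    apply (rule generated_rule[OF mono_pow2_rule, where ws = "[pe m (2 ^ m)]"])
     apply (unfold pow2_rule_def)[1]
     apply force
    using Suc by simp
qed

lemma generated_pow2_rule_iff: "generated pow2_rule S (pe m p) \<longleftrightarrow> p = 2 ^ m"
  using pow2_rule_sound[of S "pe m p"] pow2_rule_complete[of S m] by auto

lemma definable_fn_pow2[definable_intros]:
  "definable_fn a \<Longrightarrow> definable_fn (\<lambda>e. 2 ^ a e)"
proof -
  assume a: "definable_fn a"
  have "definable (\<lambda>S e. generated pow2_rule S (pe (a (\<lambda>i. e (Suc i))) (e 0)))"
    by (rule definable_generated; (unfold pow2_rule_def)?; intro definable_intros definable_fn_ren[OF a])
  then show ?thesis unfolding definable_fn_def by (rule definable_cong) (auto simp: generated_pow2_rule_iff)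
qed

text \<open>Relations on terms and on term lists are generated together: instances about a term are
  tagged with 0, those about a term list with 1.\<close>
definition fv_trm_rule :: "nat set \<Rightarrow> (nat \<Rightarrow> bool) \<Rightarrow> nat \<Rightarrow> bool" where
  "fv_trm_rule S X v \<longleftrightarrow>
    (\<exists>y. v = pe 0 (pe (pe 0 y) y)) \<or>
    (\<exists>f l y. v = pe 0 (pe (pe 1 (pe f l)) y) \<and> X (pe 1 (pe l y))) \<or>
    (\<exists>a l y. v = pe 1 (pe (Suc (pe a l)) y) \<and> (X (pe 0 (pe a y)) \<or> X (pe 1 (pe l y))))"

lemma mono_fv_trm_rule: "mono_rule fv_trm_rule"
  by (rule mono_ruleI, unfold fv_trm_rule_def, intro conj_mono disj_mono ex_mono imp_refl; assumption)

definition code_fv_trm :: "nat set \<Rightarrow> nat \<Rightarrow> nat \<Rightarrow> bool" where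
  "code_fv_trm S n y \<longleftrightarrow> generated fv_trm_rule S (pe 0 (pe n y))"
definition code_fv_trms :: "nat set \<Rightarrow> nat \<Rightarrow> nat \<Rightarrow> bool" where
  "code_fv_trms S n y \<longleftrightarrow> generated fv_trm_rule S (pe 1 (pe n y))"

lemma fv_trm_rule_sound:
  assumes "generated fv_trm_rule S v"
  shows "(\<forall>n y. v = pe 0 (pe n y) \<longrightarrow> (\<forall>t. n = enc_trm t \<longrightarrow> y \<in> fv_trm t)) \<and>
         (\<forall>l y. v = pe 1 (pe l y) \<longrightarrow> (\<forall>ts. l = enc_trms ts \<longrightarrow> (\<exists>t\<in>set ts. y \<in> fv_trm t)))"
  using assms
proof (rule generated_induct[rotated])
  fix X v
  assume r: "fv_trm_rule S X v" and ih: "\<And>w. X w \<Longrightarrow> (\<forall>n y. w = pe 0 (pe n y) \<longrightarrow> (\<forall>t. n = enc_trm t \<longrightarrow> y \<in> fv_trm t)) \<and>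
         (\<forall>l y. w = pe 1 (pe l y) \<longrightarrow> (\<forall>ts. l = enc_trms ts \<longrightarrow> (\<exists>t\<in>set ts. y \<in> fv_trm t)))"
  from r show "(\<forall>n y. v = pe 0 (pe n y) \<longrightarrow> (\<forall>t. n = enc_trm t \<longrightarrow> y \<in> fv_trm t)) \<and>
         (\<forall>l y. v = pe 1 (pe l y) \<longrightarrow> (\<forall>ts. l = enc_trms ts \<longrightarrow> (\<exists>t\<in>set ts. y \<in> fv_trm t)))"
    unfolding fv_trm_rule_def by (auto dest!: ih)
qed

lemma code_fv_trms_of:
  assumes "\<exists>t\<in>set ts. code_fv_trm S (enc_trm t) y"
  shows "code_fv_trms S (enc_trms ts) y"
  using assms unfolding code_fv_trm_def code_fv_trms_def
proof (induct ts)
  case (Cons u us)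
  show ?case
  proof (cases "generated fv_trm_rule S (pe 0 (pe (enc_trm u) y))")
    case True
    have "fv_trm_rule S (\<lambda>w. w \<in> set [pe 0 (pe (enc_trm u) y)]) (pe 1 (pe (enc_trms (u # us)) y))"
      by (simp add: fv_trm_rule_def)
    then show ?thesis by (rule generated_rule[OF mono_fv_trm_rule]) (simp add: True)
  next
    case False
    have "fv_trm_rule S (\<lambda>w. w \<in> set [pe 1 (pe (enc_trms us) y)]) (pe 1 (pe (enc_trms (u # us)) y))"
      by (simp add: fv_trm_rule_def)
    then show ?thesis by (rule generated_rule[OF mono_fv_trm_rule]) (use Cons False in simp)
  qed
qed simp

lemma code_fv_trm_complete: "y \<in> fv_trm t \<Longrightarrow> code_fv_trm S (enc_trm t) y"
proof (induct t)
  case (TVar x)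
  have "fv_trm_rule S (\<lambda>w. w \<in> set []) (pe 0 (pe (enc_trm (TVar x)) y))"
    using TVar by (simp add: fv_trm_rule_def)
  then show ?case unfolding code_fv_trm_def by (rule generated_rule[OF mono_fv_trm_rule]) simp
next
  case (TFn f ts)
  have r: "fv_trm_rule S (\<lambda>w. w \<in> set [pe 1 (pe (enc_trms ts) y)]) (pe 0 (pe (enc_trm (TFn f ts)) y))"
    by (simp add: fv_trm_rule_def)
  have "code_fv_trms S (enc_trms ts) y" using TFn by (intro code_fv_trms_of) auto
  then show ?case
    unfolding code_fv_trm_def code_fv_trms_def by (intro generated_rule[OF mono_fv_trm_rule r]) simp
qed simp

lemma code_fv_trm_iff: "code_fv_trm S (enc_trm t) y \<longleftrightarrow> y \<in> fv_trm t"
  using code_fv_trm_complete fv_trm_rule_sound unfolding code_fv_trm_def by blast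

lemma code_fv_trms_iff: "code_fv_trms S (enc_trms ts) y \<longleftrightarrow> (\<exists>t\<in>set ts. y \<in> fv_trm t)"
  using fv_trm_rule_sound[of S] code_fv_trms_of[of ts S y]
  by (auto simp: code_fv_trms_def code_fv_trm_iff)

lemma definable_code_fv_trm[definable_intros]:
  "definable_fn a \<Longrightarrow> definable_fn b \<Longrightarrow> definable (\<lambda>S e. code_fv_trm S (a e) (b e))"
  unfolding code_fv_trm_def by (rule definable_generated; (unfold fv_trm_rule_def)?; (intro definable_intros)?)
lemma definable_code_fv_trms[definable_intros]:
  "definable_fn a \<Longrightarrow> definable_fn b \<Longrightarrow> definable (\<lambda>S e. code_fv_trms S (a e) (b e))"
  unfolding code_fv_trms_def by (rule definable_generated; (unfold fv_trm_rule_def)?; (intro definable_intros)?)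

definition fv_fm_rule :: "nat set \<Rightarrow> (nat \<Rightarrow> bool) \<Rightarrow> nat \<Rightarrow> bool" where
  "fv_fm_rule S X v \<longleftrightarrow>
    (\<exists>s u y. v = pe (pe 0 (pe s u)) y \<and> (code_fv_trm S s y \<or> code_fv_trm S u y)) \<or>
    (\<exists>P l y. v = pe (pe 1 (pe P l)) y \<and> code_fv_trms S l y) \<or>
    (\<exists>p y. v = pe (pe 2 p) y \<and> X (pe p y)) \<or>
    (\<exists>p y. v = pe (pe 3 p) y \<and> X (pe p y)) \<or>
    (\<exists>p q y. v = pe (pe 4 (pe p q)) y \<and> (X (pe p y) \<or> X (pe q y))) \<or>
    (\<exists>x p y. v = pe (pe 5 (pe x p)) y \<and> y \<noteq> x \<and> X (pe p y))"

lemma mono_fv_fm_rule: "mono_rule fv_fm_rule"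
  by (rule mono_ruleI, unfold fv_fm_rule_def, intro conj_mono disj_mono ex_mono imp_refl; assumption)

definition code_fv_fm :: "nat set \<Rightarrow> nat \<Rightarrow> nat \<Rightarrow> bool" where
  "code_fv_fm S n y \<longleftrightarrow> generated fv_fm_rule S (pe n y)"

lemma fv_fm_rule_sound:
  assumes "generated fv_fm_rule S v"
  shows "\<forall>n y. v = pe n y \<longrightarrow> (\<forall>\<phi>. n = enc_fm \<phi> \<longrightarrow> y \<in> fv_fm \<phi>)"
  using assms
proof (rule generated_induct[rotated])
  fix X v
  assume r: "fv_fm_rule S X v" and ih: "\<And>w. X w \<Longrightarrow> \<forall>n y. w = pe n y \<longrightarrow> (\<forall>\<phi>. n = enc_fm \<phi> \<longrightarrow> y \<in> fv_fm \<phi>)"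
  from r show "\<forall>n y. v = pe n y \<longrightarrow> (\<forall>\<phi>. n = enc_fm \<phi> \<longrightarrow> y \<in> fv_fm \<phi>)"
    unfolding fv_fm_rule_def by (auto dest!: ih simp: code_fv_trm_iff code_fv_trms_iff)
qed

lemma code_fv_fm_complete: "y \<in> fv_fm \<phi> \<Longrightarrow> code_fv_fm S (enc_fm \<phi>) y"
  unfolding code_fv_fm_def
proof (induct \<phi>)
  case (FDist s u)
  then show ?case
    by (intro generated_rule[OF mono_fv_fm_rule, where ws = "[]"]) (auto simp: fv_fm_rule_def code_fv_trm_iff)
next
  case (FPred P ts)
  then show ?case
    by (intro generated_rule[OF mono_fv_fm_rule, where ws = "[]"]) (auto simp: fv_fm_rule_def code_fv_trms_iff)
next
  case (FNeg \<phi>)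
  then show ?case
    apply (intro generated_rule[OF mono_fv_fm_rule, where ws = "[pe (enc_fm \<phi>) y]"])
     apply (unfold fv_fm_rule_def)[1]
    by auto
next
  case (FHalf \<phi>)
  then show ?case
    apply (intro generated_rule[OF mono_fv_fm_rule, where ws = "[pe (enc_fm \<phi>) y]"])
     apply (unfold fv_fm_rule_def)[1]
    by auto
next
  case (FMinus \<phi> \<psi>)
  show ?case
  proof (cases "y \<in> fv_fm \<phi>")
    case True
    then show ?thesis using FMinus
      apply (intro generated_rule[OF mono_fv_fm_rule, where ws = "[pe (enc_fm \<phi>) y]"])
       apply (unfold fv_fm_rule_def)[1]
      by auto
  next
    case False
    then show ?thesis using FMinus
      apply (intro generated_rule[OF mono_fv_fm_rule, where ws = "[pe (enc_fm \<psi>) y]"])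
       apply (unfold fv_fm_rule_def)[1]
      by auto
  qed
next
  case (FSup x \<phi>)
  then show ?case
    apply (intro generated_rule[OF mono_fv_fm_rule, where ws = "[pe (enc_fm \<phi>) y]"])
     apply (unfold fv_fm_rule_def)[1]
    by auto
qed

lemma code_fv_fm_iff: "code_fv_fm S (enc_fm \<phi>) y \<longleftrightarrow> y \<in> fv_fm \<phi>"
  using code_fv_fm_complete fv_fm_rule_sound unfolding code_fv_fm_def by blast

lemma definable_code_fv_fm[definable_intros]:
  "definable_fn a \<Longrightarrow> definable_fn b \<Longrightarrow> definable (\<lambda>S e. code_fv_fm S (a e) (b e))"
  unfolding code_fv_fm_def by (rule definable_generated; (unfold fv_fm_rule_def)?; (intro definable_intros)?)

definition subst_trm_rule :: "nat set \<Rightarrow> (nat \<Rightarrow> bool) \<Rightarrow> nat \<Rightarrow> bool" where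
  "subst_trm_rule S X v \<longleftrightarrow>
    (\<exists>x t. v = pe 0 (pe x (pe t (pe (pe 0 x) t)))) \<or>
    (\<exists>x t y. y \<noteq> x \<and> v = pe 0 (pe x (pe t (pe (pe 0 y) (pe 0 y))))) \<or>
    (\<exists>x t c. v = pe 0 (pe x (pe t (pe (pe 2 c) (pe 2 c))))) \<or>
    (\<exists>x t f l l'. v = pe 0 (pe x (pe t (pe (pe 1 (pe f l)) (pe 1 (pe f l'))))) \<and> X (pe 1 (pe x (pe t (pe l l'))))) \<or>
    (\<exists>x t. v = pe 1 (pe x (pe t (pe 0 0)))) \<or>
    (\<exists>x t a a' l l'. v = pe 1 (pe x (pe t (pe (Suc (pe a l)) (Suc (pe a' l'))))) \<and>
        X (pe 0 (pe x (pe t (pe a a')))) \<and> X (pe 1 (pe x (pe t (pe l l')))))"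

lemma mono_subst_trm_rule: "mono_rule subst_trm_rule"
  by (rule mono_ruleI, unfold subst_trm_rule_def, intro conj_mono disj_mono ex_mono imp_refl; assumption)

definition code_subst_trm :: "nat set \<Rightarrow> nat \<Rightarrow> nat \<Rightarrow> nat \<Rightarrow> nat \<Rightarrow> bool" where
  "code_subst_trm S x t s s' \<longleftrightarrow> generated subst_trm_rule S (pe 0 (pe x (pe t (pe s s'))))"
definition code_subst_trms :: "nat set \<Rightarrow> nat \<Rightarrow> nat \<Rightarrow> nat \<Rightarrow> nat \<Rightarrow> bool" where
  "code_subst_trms S x t s s' \<longleftrightarrow> generated subst_trm_rule S (pe 1 (pe x (pe t (pe s s'))))"

lemma subst_trm_rule_sound:
  assumes "generated subst_trm_rule S v"
  shows "(\<forall>x t s s'. v = pe 0 (pe x (pe t (pe s s'))) \<longrightarrow> (\<forall>\<tau> \<sigma>. t = enc_trm \<tau> \<longrightarrow> s = enc_trm \<sigma> \<longrightarrow> s' = enc_trm (subst_trm x \<tau> \<sigma>))) \<and>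
         (\<forall>x t s s'. v = pe 1 (pe x (pe t (pe s s'))) \<longrightarrow> (\<forall>\<tau> ts. t = enc_trm \<tau> \<longrightarrow> s = enc_trms ts \<longrightarrow> s' = enc_trms (map (subst_trm x \<tau>) ts)))"
  using assms
proof (rule generated_induct[rotated])
  fix X v
  assume r: "subst_trm_rule S X v" and ih: "\<And>w. X w \<Longrightarrow> (\<forall>x t s s'. w = pe 0 (pe x (pe t (pe s s'))) \<longrightarrow> (\<forall>\<tau> \<sigma>. t = enc_trm \<tau> \<longrightarrow> s = enc_trm \<sigma> \<longrightarrow> s' = enc_trm (subst_trm x \<tau> \<sigma>))) \<and>
         (\<forall>x t s s'. w = pe 1 (pe x (pe t (pe s s'))) \<longrightarrow> (\<forall>\<tau> ts. t = enc_trm \<tau> \<longrightarrow> s = enc_trms ts \<longrightarrow> s' = enc_trms (map (subst_trm x \<tau>) ts)))"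
  from r show "(\<forall>x t s s'. v = pe 0 (pe x (pe t (pe s s'))) \<longrightarrow> (\<forall>\<tau> \<sigma>. t = enc_trm \<tau> \<longrightarrow> s = enc_trm \<sigma> \<longrightarrow> s' = enc_trm (subst_trm x \<tau> \<sigma>))) \<and>
         (\<forall>x t s s'. v = pe 1 (pe x (pe t (pe s s'))) \<longrightarrow> (\<forall>\<tau> ts. t = enc_trm \<tau> \<longrightarrow> s = enc_trms ts \<longrightarrow> s' = enc_trms (map (subst_trm x \<tau>) ts)))"
    unfolding subst_trm_rule_def by (auto dest!: ih)
qed

lemma code_subst_trms_of:
  assumes "\<forall>\<sigma>\<in>set ts. code_subst_trm S x (enc_trm \<tau>) (enc_trm \<sigma>) (enc_trm (subst_trm x \<tau> \<sigma>))"
  shows "code_subst_trms S x (enc_trm \<tau>) (enc_trms ts) (enc_trms (map (subst_trm x \<tau>) ts))"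
  using assms unfolding code_subst_trm_def code_subst_trms_def
proof (induct ts)
  case Nil
  have "subst_trm_rule S (\<lambda>w. w \<in> set [])
      (pe 1 (pe x (pe (enc_trm \<tau>) (pe (enc_trms []) (enc_trms (map (subst_trm x \<tau>) []))))))"
    by (simp add: subst_trm_rule_def)
  then show ?case by (rule generated_rule[OF mono_subst_trm_rule]) simp
next
  case (Cons u us)
  let ?u = "pe 0 (pe x (pe (enc_trm \<tau>) (pe (enc_trm u) (enc_trm (subst_trm x \<tau> u)))))"
  let ?us = "pe 1 (pe x (pe (enc_trm \<tau>) (pe (enc_trms us) (enc_trms (map (subst_trm x \<tau>) us)))))"
  have "subst_trm_rule S (\<lambda>w. w \<in> set [?u, ?us])
      (pe 1 (pe x (pe (enc_trm \<tau>) (pe (enc_trms (u # us)) (enc_trms (map (subst_trm x \<tau>) (u # us)))))))"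
    by (simp add: subst_trm_rule_def)
  then show ?case by (rule generated_rule[OF mono_subst_trm_rule]) (use Cons in simp)
qed

lemma code_subst_trm_complete:
  "code_subst_trm S x (enc_trm \<tau>) (enc_trm \<sigma>) (enc_trm (subst_trm x \<tau> \<sigma>))"
proof (induct \<sigma>)
  case (TFn f ts)
  let ?ts = "pe 1 (pe x (pe (enc_trm \<tau>) (pe (enc_trms ts) (enc_trms (map (subst_trm x \<tau>) ts)))))"
  have r: "subst_trm_rule S (\<lambda>w. w \<in> set [?ts])
      (pe 0 (pe x (pe (enc_trm \<tau>) (pe (enc_trm (TFn f ts)) (enc_trm (subst_trm x \<tau> (TFn f ts)))))))"
    by (simp add: subst_trm_rule_def)
  have "code_subst_trms S x (enc_trm \<tau>) (enc_trms ts) (enc_trms (map (subst_trm x \<tau>) ts))"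
    using TFn by (intro code_subst_trms_of) auto
  then show ?case
    unfolding code_subst_trm_def code_subst_trms_def
    by (intro generated_rule[OF mono_subst_trm_rule r]) simp
qed (unfold code_subst_trm_def, auto intro: generated_rule[OF mono_subst_trm_rule, where ws = "[]"]
    simp: subst_trm_rule_def)

lemma code_subst_trms_complete:
  "code_subst_trms S x (enc_trm \<tau>) (enc_trms ts) (enc_trms (map (subst_trm x \<tau>) ts))"
  by (rule code_subst_trms_of) (simp add: code_subst_trm_complete)

lemma code_subst_trm_iff:
  "code_subst_trm S x (enc_trm \<tau>) (enc_trm \<sigma>) s' \<longleftrightarrow> s' = enc_trm (subst_trm x \<tau> \<sigma>)"
proof
  assume "code_subst_trm S x (enc_trm \<tau>) (enc_trm \<sigma>) s'"
  then show "s' = enc_trm (subst_trm x \<tau> \<sigma>)"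
    unfolding code_subst_trm_def by (rule subst_trm_rule_sound[THEN conjunct1, rule_format, OF _ refl refl refl])
qed (use code_subst_trm_complete in simp)

lemma code_subst_trms_iff:
  "code_subst_trms S x (enc_trm \<tau>) (enc_trms ts) s' \<longleftrightarrow> s' = enc_trms (map (subst_trm x \<tau>) ts)"
proof
  assume "code_subst_trms S x (enc_trm \<tau>) (enc_trms ts) s'"
  then show "s' = enc_trms (map (subst_trm x \<tau>) ts)"
    unfolding code_subst_trms_def by (rule subst_trm_rule_sound[THEN conjunct2, rule_format, OF _ refl refl refl])
qed (use code_subst_trms_complete in simp)

lemma definable_code_subst_trm[definable_intros]:
  "definable_fn x \<Longrightarrow> definable_fn a \<Longrightarrow> definable_fn b \<Longrightarrow> definable_fn c \<Longrightarrow> definable (\<lambda>S e. code_subst_trm S (x e) (a e) (b e) (c e))"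
  unfolding code_subst_trm_def by (rule definable_generated; (unfold subst_trm_rule_def)?; (intro definable_intros)?)
lemma definable_code_subst_trms[definable_intros]:
  "definable_fn x \<Longrightarrow> definable_fn a \<Longrightarrow> definable_fn b \<Longrightarrow> definable_fn c \<Longrightarrow> definable (\<lambda>S e. code_subst_trms S (x e) (a e) (b e) (c e))"
  unfolding code_subst_trms_def by (rule definable_generated; (unfold subst_trm_rule_def)?; (intro definable_intros)?)

definition subst_fm_rule :: "nat set \<Rightarrow> (nat \<Rightarrow> bool) \<Rightarrow> nat \<Rightarrow> bool" where
  "subst_fm_rule S X v \<longleftrightarrow>
    (\<exists>x t s u s' u'. v = pe x (pe t (pe (pe 0 (pe s u)) (pe 0 (pe s' u')))) \<and> code_subst_trm S x t s s' \<and> code_subst_trm S x t u u') \<or>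
    (\<exists>x t P l l'. v = pe x (pe t (pe (pe 1 (pe P l)) (pe 1 (pe P l')))) \<and> code_subst_trms S x t l l') \<or>
    (\<exists>x t p p'. v = pe x (pe t (pe (pe 2 p) (pe 2 p'))) \<and> X (pe x (pe t (pe p p')))) \<or>
    (\<exists>x t p p'. v = pe x (pe t (pe (pe 3 p) (pe 3 p'))) \<and> X (pe x (pe t (pe p p')))) \<or>
    (\<exists>x t p q p' q'. v = pe x (pe t (pe (pe 4 (pe p q)) (pe 4 (pe p' q')))) \<and>
        X (pe x (pe t (pe p p'))) \<and> X (pe x (pe t (pe q q')))) \<or>
    (\<exists>x t p. v = pe x (pe t (pe (pe 5 (pe x p)) (pe 5 (pe x p))))) \<or>
    (\<exists>x t y p p'. y \<noteq> x \<and> v = pe x (pe t (pe (pe 5 (pe y p)) (pe 5 (pe y p')))) \<and> X (pe x (pe t (pe p p'))))"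

lemma mono_subst_fm_rule: "mono_rule subst_fm_rule"
  by (rule mono_ruleI, unfold subst_fm_rule_def, intro conj_mono disj_mono ex_mono imp_refl; assumption)

definition code_subst_fm :: "nat set \<Rightarrow> nat \<Rightarrow> nat \<Rightarrow> nat \<Rightarrow> nat \<Rightarrow> bool" where
  "code_subst_fm S x t n n' \<longleftrightarrow> generated subst_fm_rule S (pe x (pe t (pe n n')))"

lemma subst_fm_rule_sound:
  assumes "generated subst_fm_rule S v"
  shows "\<forall>x t n n'. v = pe x (pe t (pe n n')) \<longrightarrow> (\<forall>\<tau> \<phi>. t = enc_trm \<tau> \<longrightarrow> n = enc_fm \<phi> \<longrightarrow> n' = enc_fm (subst_fm x \<tau> \<phi>))"
  using assms
proof (rule generated_induct[rotated])
  fix X v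
  assume r: "subst_fm_rule S X v" and ih: "\<And>w. X w \<Longrightarrow> \<forall>x t n n'. w = pe x (pe t (pe n n')) \<longrightarrow> (\<forall>\<tau> \<phi>. t = enc_trm \<tau> \<longrightarrow> n = enc_fm \<phi> \<longrightarrow> n' = enc_fm (subst_fm x \<tau> \<phi>))"
  from r show "\<forall>x t n n'. v = pe x (pe t (pe n n')) \<longrightarrow> (\<forall>\<tau> \<phi>. t = enc_trm \<tau> \<longrightarrow> n = enc_fm \<phi> \<longrightarrow> n' = enc_fm (subst_fm x \<tau> \<phi>))"
    unfolding subst_fm_rule_def by (auto dest!: ih simp: code_subst_trm_iff code_subst_trms_iff)
qed

lemma code_subst_fm_complete:
  "code_subst_fm S x (enc_trm \<tau>) (enc_fm \<phi>) (enc_fm (subst_fm x \<tau> \<phi>))"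
  unfolding code_subst_fm_def
proof (induct \<phi>)
  case (FDist s u)
  then show ?case
    by (intro generated_rule[OF mono_subst_fm_rule, where ws = "[]"]) (auto simp: subst_fm_rule_def code_subst_trm_iff)
next
  case (FPred P ts)
  then show ?case
    by (intro generated_rule[OF mono_subst_fm_rule, where ws = "[]"]) (auto simp: subst_fm_rule_def code_subst_trms_iff)
next
  case (FNeg \<phi>)
  then show ?case
    apply (intro generated_rule[OF mono_subst_fm_rule, where ws = "[pe x (pe (enc_trm \<tau>) (pe (enc_fm \<phi>) (enc_fm (subst_fm x \<tau> \<phi>))))]"])
     apply (unfold subst_fm_rule_def)[1]
    by auto
next
  case (FHalf \<phi>)
  then show ?case
    apply (intro generated_rule[OF mono_subst_fm_rule, where ws = "[pe x (pe (enc_trm \<tau>) (pe (enc_fm \<phi>) (enc_fm (subst_fm x \<tau> \<phi>))))]"])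
     apply (unfold subst_fm_rule_def)[1]
    by auto
next
  case (FMinus \<phi> \<psi>)
  then show ?case
    apply (intro generated_rule[OF mono_subst_fm_rule, where ws = "[pe x (pe (enc_trm \<tau>) (pe (enc_fm \<phi>) (enc_fm (subst_fm x \<tau> \<phi>)))),
       pe x (pe (enc_trm \<tau>) (pe (enc_fm \<psi>) (enc_fm (subst_fm x \<tau> \<psi>))))]"])
     apply (unfold subst_fm_rule_def)[1]
    by auto
next
  case (FSup y \<phi>)
  show ?case
  proof (cases "y = x")
    case True
    then show ?thesis
      by (intro generated_rule[OF mono_subst_fm_rule, where ws = "[]"]) (auto simp: subst_fm_rule_def)
  next
    case False
    then show ?thesis using FSup
      apply (intro generated_rule[OF mono_subst_fm_rule, where ws = "[pe x (pe (enc_trm \<tau>) (pe (enc_fm \<phi>) (enc_fm (subst_fm x \<tau> \<phi>))))]"])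
       apply (unfold subst_fm_rule_def)[1]
      by auto
  qed
qed

lemma code_subst_fm_iff:
  "code_subst_fm S x (enc_trm \<tau>) (enc_fm \<phi>) n' \<longleftrightarrow> n' = enc_fm (subst_fm x \<tau> \<phi>)"
proof
  assume "code_subst_fm S x (enc_trm \<tau>) (enc_fm \<phi>) n'"
  then show "n' = enc_fm (subst_fm x \<tau> \<phi>)"
    unfolding code_subst_fm_def by (rule subst_fm_rule_sound[rule_format, OF _ refl refl refl])
qed (use code_subst_fm_complete in simp)

lemma definable_code_subst_fm[definable_intros]:
  "definable_fn x \<Longrightarrow> definable_fn a \<Longrightarrow> definable_fn b \<Longrightarrow> definable_fn c \<Longrightarrow> definable (\<lambda>S e. code_subst_fm S (x e) (a e) (b e) (c e))"
  unfolding code_subst_fm_def by (rule definable_generated; (unfold subst_fm_rule_def)?; (intro definable_intros)?)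

definition free_for_rule :: "nat set \<Rightarrow> (nat \<Rightarrow> bool) \<Rightarrow> nat \<Rightarrow> bool" where
  "free_for_rule S X v \<longleftrightarrow>
    (\<exists>x t s u. v = pe x (pe t (pe 0 (pe s u)))) \<or>
    (\<exists>x t P l. v = pe x (pe t (pe 1 (pe P l)))) \<or>
    (\<exists>x t p. v = pe x (pe t (pe 2 p)) \<and> X (pe x (pe t p))) \<or>
    (\<exists>x t p. v = pe x (pe t (pe 3 p)) \<and> X (pe x (pe t p))) \<or>
    (\<exists>x t p q. v = pe x (pe t (pe 4 (pe p q))) \<and> X (pe x (pe t p)) \<and> X (pe x (pe t q))) \<or>
    (\<exists>x t y p. v = pe x (pe t (pe 5 (pe y p))) \<and> (\<not> code_fv_fm S p x \<or> x = y)) \<or>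
    (\<exists>x t y p. v = pe x (pe t (pe 5 (pe y p))) \<and> \<not> code_fv_trm S t y \<and> X (pe x (pe t p)))"

lemma mono_free_for_rule: "mono_rule free_for_rule"
  by (rule mono_ruleI, unfold free_for_rule_def, intro conj_mono disj_mono ex_mono imp_refl; assumption)

definition code_free_for :: "nat set \<Rightarrow> nat \<Rightarrow> nat \<Rightarrow> nat \<Rightarrow> bool" where
  "code_free_for S x t n \<longleftrightarrow> generated free_for_rule S (pe x (pe t n))"

lemma free_for_rule_sound:
  assumes "generated free_for_rule S v"
  shows "\<forall>x t n. v = pe x (pe t n) \<longrightarrow> (\<forall>\<tau> \<phi>. t = enc_trm \<tau> \<longrightarrow> n = enc_fm \<phi> \<longrightarrow> free_for x \<tau> \<phi>)"
  using assms
proof (rule generated_induct[rotated])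
  fix X v
  assume r: "free_for_rule S X v" and ih: "\<And>w. X w \<Longrightarrow> \<forall>x t n. w = pe x (pe t n) \<longrightarrow> (\<forall>\<tau> \<phi>. t = enc_trm \<tau> \<longrightarrow> n = enc_fm \<phi> \<longrightarrow> free_for x \<tau> \<phi>)"
  from r show "\<forall>x t n. v = pe x (pe t n) \<longrightarrow> (\<forall>\<tau> \<phi>. t = enc_trm \<tau> \<longrightarrow> n = enc_fm \<phi> \<longrightarrow> free_for x \<tau> \<phi>)"
    unfolding free_for_rule_def by (auto dest!: ih simp: code_fv_trm_iff code_fv_fm_iff)
qed

lemma code_free_for_complete:
  "free_for x \<tau> \<phi> \<Longrightarrow> code_free_for S x (enc_trm \<tau>) (enc_fm \<phi>)"
  unfolding code_free_for_def
proof (induct \<phi>)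
  case (FDist s u)
  then show ?case
    by (intro generated_rule[OF mono_free_for_rule, where ws = "[]"]) (auto simp: free_for_rule_def)
next
  case (FPred P ts)
  then show ?case
    by (intro generated_rule[OF mono_free_for_rule, where ws = "[]"]) (auto simp: free_for_rule_def)
next
  case (FNeg \<phi>)
  then show ?case
    apply (intro generated_rule[OF mono_free_for_rule, where ws = "[pe x (pe (enc_trm \<tau>) (enc_fm \<phi>))]"])
     apply (unfold free_for_rule_def)[1]
    by auto
next
  case (FHalf \<phi>)
  then show ?case
    apply (intro generated_rule[OF mono_free_for_rule, where ws = "[pe x (pe (enc_trm \<tau>) (enc_fm \<phi>))]"])
     apply (unfold free_for_rule_def)[1]
    by auto
next
  case (FMinus \<phi> \<psi>)
  then show ?case
    apply (intro generated_rule[OF mono_free_for_rule, where ws = "[pe x (pe (enc_trm \<tau>) (enc_fm \<phi>)), pe x (pe (enc_trm \<tau>) (enc_fm \<psi>))]"])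
     apply (unfold free_for_rule_def)[1]
    by auto
next
  case (FSup y \<phi>)
  show ?case
  proof (cases "x \<notin> fv_fm (FSup y \<phi>)")
    case True
    then show ?thesis
      by (intro generated_rule[OF mono_free_for_rule, where ws = "[]"]) (auto simp: free_for_rule_def code_fv_fm_iff)
  next
    case False
    then have "y \<notin> fv_trm \<tau>" "free_for x \<tau> \<phi>" using FSup(2) by auto
    then show ?thesis using FSup(1)
      apply (intro generated_rule[OF mono_free_for_rule, where ws = "[pe x (pe (enc_trm \<tau>) (enc_fm \<phi>))]"])
       apply (unfold free_for_rule_def)[1]
      by (auto simp: code_fv_trm_iff)
  qed
qed

lemma code_free_for_iff:
  "code_free_for S x (enc_trm \<tau>) (enc_fm \<phi>) \<longleftrightarrow> free_for x \<tau> \<phi>"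
proof
  assume "code_free_for S x (enc_trm \<tau>) (enc_fm \<phi>)"
  then show "free_for x \<tau> \<phi>"
    unfolding code_free_for_def by (rule free_for_rule_sound[rule_format, OF _ refl refl refl])
qed (rule code_free_for_complete)

lemma definable_code_free_for[definable_intros]:
  "definable_fn x \<Longrightarrow> definable_fn a \<Longrightarrow> definable_fn b \<Longrightarrow> definable (\<lambda>S e. code_free_for S (x e) (a e) (b e))"
  unfolding code_free_for_def by (rule definable_generated; (unfold free_for_rule_def)?; (intro definable_intros)?)

definition qfree_rule :: "nat set \<Rightarrow> (nat \<Rightarrow> bool) \<Rightarrow> nat \<Rightarrow> bool" where
  "qfree_rule S X v \<longleftrightarrow>
    (\<exists>s u. v = pe 0 (pe s u)) \<or> (\<exists>P l. v = pe 1 (pe P l)) \<or>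
    (\<exists>p. v = pe 2 p \<and> X p) \<or> (\<exists>p. v = pe 3 p \<and> X p) \<or>
    (\<exists>p q. v = pe 4 (pe p q) \<and> X p \<and> X q)"

lemma mono_qfree_rule: "mono_rule qfree_rule"
  by (rule mono_ruleI, unfold qfree_rule_def, intro conj_mono disj_mono ex_mono imp_refl; assumption)

lemma qfree_rule_sound:
  assumes "generated qfree_rule S v"
  shows "\<forall>\<phi>. v = enc_fm \<phi> \<longrightarrow> qfree \<phi>"
  using assms
proof (rule generated_induct[rotated])
  fix X v
  assume r: "qfree_rule S X v" and ih: "\<And>w. X w \<Longrightarrow> \<forall>\<phi>. w = enc_fm \<phi> \<longrightarrow> qfree \<phi>"
  from r show "\<forall>\<phi>. v = enc_fm \<phi> \<longrightarrow> qfree \<phi>"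
    unfolding qfree_rule_def
    apply (elim disjE exE conjE)
    apply force
    apply force
    apply (force dest: ih)
    apply (force dest: ih)
    apply (force dest: ih)
    done
qed

lemma qfree_rule_complete: "qfree \<phi> \<Longrightarrow> generated qfree_rule S (enc_fm \<phi>)"
proof (induct \<phi>)
  case (FNeg \<phi>)
  then show ?case
    apply (intro generated_rule[OF mono_qfree_rule, where ws = "[enc_fm \<phi>]"])
     apply (unfold qfree_rule_def)[1]
    by auto
next
  case (FHalf \<phi>)
  then show ?case
    apply (intro generated_rule[OF mono_qfree_rule, where ws = "[enc_fm \<phi>]"])
     apply (unfold qfree_rule_def)[1]
    by auto
next
  case (FMinus \<phi> \<psi>)
  then show ?case
    apply (intro generated_rule[OF mono_qfree_rule, where ws = "[enc_fm \<phi>, enc_fm \<psi>]"])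
     apply (unfold qfree_rule_def)[1]
    by auto
next
  case (FDist s u)
  show ?case by (rule generated_rule[OF mono_qfree_rule, where ws = "[]"]) (auto simp: qfree_rule_def)
next
  case (FPred P ts)
  show ?case by (rule generated_rule[OF mono_qfree_rule, where ws = "[]"]) (auto simp: qfree_rule_def)
qed simp

lemma generated_qfree_rule_iff:
  "generated qfree_rule S (enc_fm \<phi>) \<longleftrightarrow> qfree \<phi>"
  using qfree_rule_sound[rule_format, OF _ refl] qfree_rule_complete by (intro iffI)

definition universal_rule :: "nat set \<Rightarrow> (nat \<Rightarrow> bool) \<Rightarrow> nat \<Rightarrow> bool" where
  "universal_rule S X v \<longleftrightarrow> generated qfree_rule S v \<or> (\<exists>x p. v = pe 5 (pe x p) \<and> X p)"

lemma mono_universal_rule: "mono_rule universal_rule"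
  by (rule mono_ruleI, unfold universal_rule_def, intro conj_mono disj_mono ex_mono imp_refl; assumption)

lemma qfree_universal: "qfree \<phi> \<Longrightarrow> universal \<phi>"
  by (cases \<phi>) auto

lemma universal_rule_sound:
  assumes "generated universal_rule S v"
  shows "\<forall>\<phi>. v = enc_fm \<phi> \<longrightarrow> universal \<phi>"
  using assms
proof (rule generated_induct[rotated])
  fix X v
  assume r: "universal_rule S X v" and ih: "\<And>w. X w \<Longrightarrow> \<forall>\<phi>. w = enc_fm \<phi> \<longrightarrow> universal \<phi>"
  from r show "\<forall>\<phi>. v = enc_fm \<phi> \<longrightarrow> universal \<phi>"
    unfolding universal_rule_def
  proof (elim disjE exE conjE)
    assume "generated qfree_rule S v" then show ?thesis by (auto simp: generated_qfree_rule_iff qfree_universal)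
  next
    fix x p assume v: "v = pe 5 (pe x p)" "X p"
    show ?thesis
    proof (intro allI impI)
      fix \<phi> assume "v = enc_fm \<phi>"
      then obtain \<psi> where "\<phi> = FSup x \<psi>" "p = enc_fm \<psi>" using v(1) by auto
      then show "universal \<phi>" using ih[OF v(2)] by simp
    qed
  qed
qed

lemma generated_universal_rule_qfree: "qfree \<phi> \<Longrightarrow> generated universal_rule S (enc_fm \<phi>)"
  by (rule generated_rule[OF mono_universal_rule, where ws = "[]"])
    (simp_all add: universal_rule_def qfree_rule_complete)

lemma universal_rule_complete:
  "universal \<phi> \<Longrightarrow> generated universal_rule S (enc_fm \<phi>)"
proof (induct \<phi>)
  case (FSup x \<phi>)
  have "universal_rule S (\<lambda>w. w \<in> set [enc_fm \<phi>]) (enc_fm (FSup x \<phi>))" by (simp add: universal_rule_def)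
  then show ?case by (rule generated_rule[OF mono_universal_rule]) (use FSup in simp)
qed (rule generated_universal_rule_qfree, simp)+

lemma generated_universal_rule_iff:
  "generated universal_rule S (enc_fm \<phi>) \<longleftrightarrow> universal \<phi>"
  using universal_rule_sound[rule_format, OF _ refl] universal_rule_complete by (intro iffI)

lemma definable_qfree_rule[definable_intros]:
  "definable_fn a \<Longrightarrow> definable (\<lambda>S e. generated qfree_rule S (a e))"
  by (rule definable_generated; (unfold qfree_rule_def)?; (intro definable_intros)?)
lemma definable_universal_rule[definable_intros]:
  "definable_fn a \<Longrightarrow> definable (\<lambda>S e. generated universal_rule S (a e))"
  by (rule definable_generated; (unfold universal_rule_def)?; (intro definable_intros)?)

definition dyad_rule :: "nat set \<Rightarrow> (nat \<Rightarrow> bool) \<Rightarrow> nat \<Rightarrow> bool" where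
  "dyad_rule S X v \<longleftrightarrow>
    v = pe 0 (pe 0 (enc_fm FZero)) \<or>
    (\<exists>k. k \<noteq> 0 \<and> v = pe 0 (pe k (enc_fm FOne))) \<or>
    (\<exists>m k n. k \<le> 2 ^ m \<and> v = pe (Suc m) (pe k (pe 3 n)) \<and> X (pe m (pe k n))) \<or>
    (\<exists>m k n. \<not> k \<le> 2 ^ m \<and> v = pe (Suc m) (pe k (pe 2 (pe 3 n))) \<and> X (pe m (pe (2 ^ Suc m - k) n)))"

lemma mono_dyad_rule: "mono_rule dyad_rule"
  by (rule mono_ruleI, unfold dyad_rule_def, intro conj_mono disj_mono ex_mono imp_refl; assumption)

lemma dyad_rule_sound:
  assumes "generated dyad_rule S v"
  shows "\<forall>m k n. v = pe m (pe k n) \<longrightarrow> n = enc_fm (dyad m k)"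
  using assms
proof (rule generated_induct[rotated])
  fix X v
  assume r: "dyad_rule S X v" and ih: "\<And>w. X w \<Longrightarrow> \<forall>m k n. w = pe m (pe k n) \<longrightarrow> n = enc_fm (dyad m k)"
  from r show "\<forall>m k n. v = pe m (pe k n) \<longrightarrow> n = enc_fm (dyad m k)"
    unfolding dyad_rule_def
    apply (elim disjE exE conjE)
    apply force
    apply force
    apply (force dest: ih)
    apply (force dest: ih)
    done
qed

lemma dyad_rule_complete: "generated dyad_rule S (pe m (pe k (enc_fm (dyad m k))))"
proof (induct m arbitrary: k)
  case 0
  have "dyad_rule S (\<lambda>w. w \<in> set []) (pe 0 (pe k (enc_fm (dyad 0 k))))"
    by (simp add: dyad_rule_def)
  then show ?case by (rule generated_rule[OF mono_dyad_rule]) simp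
next
  case (Suc m)
  define k' where "k' = (if k \<le> 2 ^ m then k else 2 ^ Suc m - k)"
  have "dyad_rule S (\<lambda>w. w \<in> set [pe m (pe k' (enc_fm (dyad m k')))]) (pe (Suc m) (pe k (enc_fm (dyad (Suc m) k))))"
    by (simp add: dyad_rule_def k'_def)
  then show ?case by (rule generated_rule[OF mono_dyad_rule]) (simp add: Suc)
qed

lemma generated_dyad_rule_iff:
  "generated dyad_rule S (pe m (pe k n)) \<longleftrightarrow> n = enc_fm (dyad m k)"
proof
  assume "generated dyad_rule S (pe m (pe k n))"
  then show "n = enc_fm (dyad m k)" by (rule dyad_rule_sound[rule_format, OF _ refl])
next
  assume "n = enc_fm (dyad m k)"
  then show "generated dyad_rule S (pe m (pe k n))" using dyad_rule_complete by simp
qed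

lemma definable_dyad_rule[definable_intros]:
  "definable_fn a \<Longrightarrow> definable (\<lambda>S e. generated dyad_rule S (a e))"
  by (rule definable_generated; (unfold dyad_rule_def)?; (intro definable_intros)?)

abbreviation enc_vars :: "nat list \<Rightarrow> nat" where "enc_vars xs \<equiv> enc_trms (map TVar xs)"

definition var_list_rule :: "nat set \<Rightarrow> (nat \<Rightarrow> bool) \<Rightarrow> nat \<Rightarrow> bool" where
  "var_list_rule S X v \<longleftrightarrow> v = pe 0 0 \<or> (\<exists>x r k. v = pe (Suc (pe (pe 0 x) r)) (Suc k) \<and> X (pe r k))"

lemma mono_var_list_rule: "mono_rule var_list_rule"
  by (rule mono_ruleI, unfold var_list_rule_def, intro conj_mono disj_mono ex_mono imp_refl; assumption)

lemma var_list_rule_sound: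
  assumes "generated var_list_rule S v"
  shows "\<forall>l k. v = pe l k \<longrightarrow> (\<exists>xs. l = enc_vars xs \<and> length xs = k)"
  using assms
proof (rule generated_induct[rotated])
  fix X v
  assume r: "var_list_rule S X v" and ih: "\<And>w. X w \<Longrightarrow> \<forall>l k. w = pe l k \<longrightarrow> (\<exists>xs. l = enc_vars xs \<and> length xs = k)"
  from r show "\<forall>l k. v = pe l k \<longrightarrow> (\<exists>xs. l = enc_vars xs \<and> length xs = k)"
    unfolding var_list_rule_def
  proof (elim disjE exE conjE)
    assume "v = pe 0 0" then show ?thesis by (auto intro!: exI[of _ "[]"])
  next
    fix x r k assume v: "v = pe (Suc (pe (pe 0 x) r)) (Suc k)" and "X (pe r k)"
    then obtain xs where "r = enc_vars xs" "length xs = k" using ih by blast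
    then show ?thesis using v by (auto intro!: exI[of _ "x # xs"])
  qed
qed

lemma var_list_rule_complete: "generated var_list_rule S (pe (enc_vars xs) (length xs))"
proof (induct xs)
  case Nil
  then show ?case
    by (intro generated_rule[OF mono_var_list_rule, where ws = "[]"]) (auto simp: var_list_rule_def)
next
  case (Cons x xs)
  then show ?case
    apply (intro generated_rule[OF mono_var_list_rule, where ws = "[pe (enc_vars xs) (length xs)]"])
     apply (unfold var_list_rule_def)[1]
    by auto
qed

definition var_update_rule :: "nat set \<Rightarrow> (nat \<Rightarrow> bool) \<Rightarrow> nat \<Rightarrow> bool" where
  "var_update_rule S X v \<longleftrightarrow>
    (\<exists>r z w k. v = pe (Suc (pe (pe 0 z) r)) (pe (Suc (pe (pe 0 w) r)) (pe 0 (pe z (pe w (Suc k))))) \<and> generated var_list_rule S (pe r k)) \<or>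
    (\<exists>x r r' i z w k. v = pe (Suc (pe (pe 0 x) r)) (pe (Suc (pe (pe 0 x) r')) (pe (Suc i) (pe z (pe w (Suc k))))) \<and>
        X (pe r (pe r' (pe i (pe z (pe w k))))))"

lemma mono_var_update_rule: "mono_rule var_update_rule"
  by (rule mono_ruleI, unfold var_update_rule_def, intro conj_mono disj_mono ex_mono imp_refl; assumption)

lemma var_update_rule_sound:
  assumes "generated var_update_rule S v"
  shows "\<forall>l l' i z w k. v = pe l (pe l' (pe i (pe z (pe w k)))) \<longrightarrow>
     (\<exists>xs. length xs = k \<and> i < k \<and> l = enc_vars (xs[i := z]) \<and> l' = enc_vars (xs[i := w]))"
  using assms
proof (rule generated_induct[rotated])
  fix X v
  assume r: "var_update_rule S X v" and ih: "\<And>v. X v \<Longrightarrow> \<forall>l l' i z w k. v = pe l (pe l' (pe i (pe z (pe w k)))) \<longrightarrow>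
     (\<exists>xs. length xs = k \<and> i < k \<and> l = enc_vars (xs[i := z]) \<and> l' = enc_vars (xs[i := w]))"
  from r show "\<forall>l l' i z w k. v = pe l (pe l' (pe i (pe z (pe w k)))) \<longrightarrow>
     (\<exists>xs. length xs = k \<and> i < k \<and> l = enc_vars (xs[i := z]) \<and> l' = enc_vars (xs[i := w]))"
    unfolding var_update_rule_def
  proof (elim disjE exE conjE)
    fix r z w k
    assume v: "v = pe (Suc (pe (pe 0 z) r)) (pe (Suc (pe (pe 0 w) r)) (pe 0 (pe z (pe w (Suc k)))))"
      and "generated var_list_rule S (pe r k)"
    then obtain xs where "r = enc_vars xs" "length xs = k" using var_list_rule_sound by blast
    then show ?thesis using v by (auto intro!: exI[of _ "z # xs"])
  next
    fix x r r' i z w k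
    assume v: "v = pe (Suc (pe (pe 0 x) r)) (pe (Suc (pe (pe 0 x) r')) (pe (Suc i) (pe z (pe w (Suc k)))))"
      and "X (pe r (pe r' (pe i (pe z (pe w k)))))"
    then obtain xs where "length xs = k" "i < k" "r = enc_vars (xs[i := z])" "r' = enc_vars (xs[i := w])"
      using ih by blast
    then show ?thesis using v by (auto intro!: exI[of _ "x # xs"])
  qed
qed

lemma var_update_rule_complete:
  "i < length xs \<Longrightarrow> generated var_update_rule S (pe (enc_vars (xs[i := z])) (pe (enc_vars (xs[i := w])) (pe i (pe z (pe w (length xs))))))"
proof (induct xs arbitrary: i)
  case Nil
  then show ?case by simp
next
  case (Cons x xs)
  show ?case
  proof (cases i)
    case 0
    then show ?thesis using var_list_rule_complete[of S xs]
      apply (intro generated_rule[OF mono_var_update_rule, where ws = "[]"])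
       apply (unfold var_update_rule_def)[1]
      by auto
  next
    case (Suc j)
    then show ?thesis using Cons(1)[of j] Cons(2)
      apply (intro generated_rule[OF mono_var_update_rule, where ws = "[pe (enc_vars (xs[j := z])) (pe (enc_vars (xs[j := w])) (pe j (pe z (pe w (length xs)))))]"])
       apply (unfold var_update_rule_def)[1]
      by auto
  qed
qed

lemma generated_var_update_rule_iff:
  "generated var_update_rule S (pe l (pe l' (pe i (pe z (pe w k))))) \<longleftrightarrow>
     (\<exists>xs. length xs = k \<and> i < k \<and> l = enc_vars (xs[i := z]) \<and> l' = enc_vars (xs[i := w]))"
proof
  assume "generated var_update_rule S (pe l (pe l' (pe i (pe z (pe w k)))))"
  then show "\<exists>xs. length xs = k \<and> i < k \<and> l = enc_vars (xs[i := z]) \<and> l' = enc_vars (xs[i := w])"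
    by (rule var_update_rule_sound[rule_format, OF _ refl])
next
  assume "\<exists>xs. length xs = k \<and> i < k \<and> l = enc_vars (xs[i := z]) \<and> l' = enc_vars (xs[i := w])"
  then obtain xs where "length xs = k" "i < k" "l = enc_vars (xs[i := z])" "l' = enc_vars (xs[i := w])" by blast
  then show "generated var_update_rule S (pe l (pe l' (pe i (pe z (pe w k)))))" using var_update_rule_complete[of i xs S z w] by simp
qed

lemma definable_var_list_rule[definable_intros]:
  "definable_fn a \<Longrightarrow> definable (\<lambda>S e. generated var_list_rule S (a e))"
  by (rule definable_generated; (unfold var_list_rule_def)?; (intro definable_intros)?)
lemma definable_var_update_rule[definable_intros]:
  "definable_fn a \<Longrightarrow> definable (\<lambda>S e. generated var_update_rule S (a e))"
  by (rule definable_generated; (unfold var_update_rule_def)?; (intro definable_intros)?)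

definition farity_codes :: "lang \<Rightarrow> nat set" where
  "farity_codes L = {prod_encode (f, farity L f) | f. f \<in> fsyms L}"
definition parity_codes :: "lang \<Rightarrow> nat set" where
  "parity_codes L = {prod_encode (P, parity L P) | P. P \<in> psyms L}"
definition fmod_codes :: "lang \<Rightarrow> nat set" where
  "fmod_codes L = {prod_encode (f, prod_encode (i, prod_encode (prod_encode (k, m), prod_encode (k', m'))))
             | f i k m k' m'. f \<in> fsyms L \<and> i < farity L f \<and> 0 < k' \<and> k' \<le> 2 ^ m' \<and>
                 dval k m < fmod L f i (dval k' m')}"
definition pmod_codes :: "lang \<Rightarrow> nat set" where
  "pmod_codes L = {prod_encode (P, prod_encode (i, prod_encode (prod_encode (k, m), prod_encode (k', m'))))
             | P i k m k' m'. P \<in> psyms L \<and> i < parity L P \<and> 0 < k' \<and> k' \<le> 2 ^ m' \<and>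
                 dval k m < pmod L P i (dval k' m')}"

lemma farity_codes_iff:
  "pe f k \<in> farity_codes L \<longleftrightarrow> f \<in> fsyms L \<and> k = farity L f"
  unfolding farity_codes_def by auto
lemma parity_codes_iff:
  "pe f k \<in> parity_codes L \<longleftrightarrow> f \<in> psyms L \<and> k = parity L f"
  unfolding parity_codes_def by auto
lemma fmod_codes_iff: "pe f (pe i (pe (pe k m) (pe k' m'))) \<in> fmod_codes L \<longleftrightarrow>
  f \<in> fsyms L \<and> i < farity L f \<and> 0 < k' \<and> k' \<le> 2 ^ m' \<and> dval k m < fmod L f i (dval k' m')"
  unfolding fmod_codes_def by auto
lemma pmod_codes_iff: "pe f (pe i (pe (pe k m) (pe k' m'))) \<in> pmod_codes L \<longleftrightarrow>
  f \<in> psyms L \<and> i < parity L f \<and> 0 < k' \<and> k' \<le> 2 ^ m' \<and> dval k m < pmod L f i (dval k' m')"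
  unfolding pmod_codes_def by auto

context
  fixes L :: lang
  assumes CL: "computable_lang L"
begin

lemma definable_farity_codes[definable_intros]:
  "definable_fn a \<Longrightarrow> definable (\<lambda>S e. a e \<in> farity_codes L)"
  using CL unfolding computable_lang_def computable_set_def farity_codes_def by (blast intro: definable_mem_ce)
lemma definable_parity_codes[definable_intros]:
  "definable_fn a \<Longrightarrow> definable (\<lambda>S e. a e \<in> parity_codes L)"
  using CL unfolding computable_lang_def computable_set_def parity_codes_def by (blast intro: definable_mem_ce)
lemma definable_fmod_codes[definable_intros]:
  "definable_fn a \<Longrightarrow> definable (\<lambda>S e. a e \<in> fmod_codes L)"
  using CL unfolding computable_lang_def fmod_codes_def by (blast intro: definable_mem_ce)
lemma definable_pmod_codes[definable_intros]:
  "definable_fn a \<Longrightarrow> definable (\<lambda>S e. a e \<in> pmod_codes L)"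
  using CL unfolding computable_lang_def pmod_codes_def by (blast intro: definable_mem_ce)

end

definition wf_trm_rule :: "lang \<Rightarrow> bool \<Rightarrow> nat set \<Rightarrow> (nat \<Rightarrow> bool) \<Rightarrow> nat \<Rightarrow> bool" where
  "wf_trm_rule L b S X v \<longleftrightarrow>
    (\<exists>x. v = pe 0 (pe 0 x)) \<or> (b \<and> (\<exists>c. v = pe 0 (pe 2 c))) \<or>
    (\<exists>f l k. v = pe 0 (pe 1 (pe f l)) \<and> pe f k \<in> farity_codes L \<and> X (pe 1 (pe l k))) \<or>
    v = pe 1 (pe 0 0) \<or>
    (\<exists>a l k. v = pe 1 (pe (Suc (pe a l)) (Suc k)) \<and> X (pe 0 a) \<and> X (pe 1 (pe l k)))"

lemma mono_wf_trm_rule: "mono_rule (wf_trm_rule L b)"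
  by (rule mono_ruleI, unfold wf_trm_rule_def, intro conj_mono disj_mono ex_mono imp_refl; assumption)

definition code_wf_trm :: "lang \<Rightarrow> bool \<Rightarrow> nat set \<Rightarrow> nat \<Rightarrow> bool" where
  "code_wf_trm L b S n \<longleftrightarrow> generated (wf_trm_rule L b) S (pe 0 n)"
definition code_wf_trms :: "lang \<Rightarrow> bool \<Rightarrow> nat set \<Rightarrow> nat \<Rightarrow> nat \<Rightarrow> bool" where
  "code_wf_trms L b S l k \<longleftrightarrow> generated (wf_trm_rule L b) S (pe 1 (pe l k))"

lemma wf_trm_rule_sound:
  assumes "generated (wf_trm_rule L b) S v"
  shows "(\<forall>n. v = pe 0 n \<longrightarrow> (\<exists>t. n = enc_trm t \<and> wf_trm L b t)) \<and>
         (\<forall>l k. v = pe 1 (pe l k) \<longrightarrow> (\<exists>ts. l = enc_trms ts \<and> length ts = k \<and> (\<forall>t\<in>set ts. wf_trm L b t)))"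
  using assms
proof (rule generated_induct[rotated])
  fix X v
  assume r: "wf_trm_rule L b S X v" and ih: "\<And>w. X w \<Longrightarrow> (\<forall>n. w = pe 0 n \<longrightarrow> (\<exists>t. n = enc_trm t \<and> wf_trm L b t)) \<and>
         (\<forall>l k. w = pe 1 (pe l k) \<longrightarrow> (\<exists>ts. l = enc_trms ts \<and> length ts = k \<and> (\<forall>t\<in>set ts. wf_trm L b t)))"
  from r show "(\<forall>n. v = pe 0 n \<longrightarrow> (\<exists>t. n = enc_trm t \<and> wf_trm L b t)) \<and>
         (\<forall>l k. v = pe 1 (pe l k) \<longrightarrow> (\<exists>ts. l = enc_trms ts \<and> length ts = k \<and> (\<forall>t\<in>set ts. wf_trm L b t)))"
    unfolding wf_trm_rule_def
  proof (elim disjE exE conjE)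
    fix x assume "v = pe 0 (pe 0 x)"
    then show ?thesis by (auto intro!: exI[of _ "TVar x"])
  next
    fix c assume "b" "v = pe 0 (pe 2 c)"
    then show ?thesis by (auto intro!: exI[of _ "TCst c"])
  next
    fix f l k assume v: "v = pe 0 (pe 1 (pe f l))" and fa: "pe f k \<in> farity_codes L" and x: "X (pe 1 (pe l k))"
    obtain ts where ts: "l = enc_trms ts" "length ts = k" "\<forall>t\<in>set ts. wf_trm L b t"
      using ih[OF x] by blast
    show ?thesis using v fa ts by (auto simp: farity_codes_iff intro!: exI[of _ "TFn f ts"])
  next
    assume "v = pe 1 (pe 0 0)"
    then show ?thesis by (auto intro!: exI[of _ "[]"])
  next
    fix a l k assume v: "v = pe 1 (pe (Suc (pe a l)) (Suc k))" and x1: "X (pe 0 a)" and x2: "X (pe 1 (pe l k))"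
    obtain t where t: "a = enc_trm t" "wf_trm L b t" using ih[OF x1] by blast
    obtain ts where ts: "l = enc_trms ts" "length ts = k" "\<forall>t\<in>set ts. wf_trm L b t"
      using ih[OF x2] by blast
    show ?thesis using v t ts by (auto intro!: exI[of _ "t # ts"])
  qed
qed

lemma code_wf_trms_of:
  assumes "\<forall>t\<in>set ts. code_wf_trm L b S (enc_trm t)"
  shows "code_wf_trms L b S (enc_trms ts) (length ts)"
  using assms unfolding code_wf_trm_def code_wf_trms_def
proof (induct ts)
  case Nil
  have "wf_trm_rule L b S (\<lambda>w. w \<in> set []) (pe 1 (pe (enc_trms []) (length [])))"
    by (simp add: wf_trm_rule_def)
  then show ?case by (rule generated_rule[OF mono_wf_trm_rule]) simp
next
  case (Cons u us)
  have "wf_trm_rule L b S (\<lambda>w. w \<in> set [pe 0 (enc_trm u), pe 1 (pe (enc_trms us) (length us))])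
      (pe 1 (pe (enc_trms (u # us)) (length (u # us))))"
    by (simp add: wf_trm_rule_def)
  then show ?case by (rule generated_rule[OF mono_wf_trm_rule]) (use Cons in simp)
qed

lemma code_wf_trm_complete: "wf_trm L b t \<Longrightarrow> code_wf_trm L b S (enc_trm t)"
proof (induct t)
  case (TFn f ts)
  have r: "wf_trm_rule L b S (\<lambda>w. w \<in> set [pe 1 (pe (enc_trms ts) (length ts))])
      (pe 0 (enc_trm (TFn f ts)))"
    using TFn.prems by (simp add: wf_trm_rule_def farity_codes_iff)
  have "code_wf_trms L b S (enc_trms ts) (length ts)" using TFn by (intro code_wf_trms_of) auto
  then show ?case
    unfolding code_wf_trm_def code_wf_trms_def by (intro generated_rule[OF mono_wf_trm_rule r]) simp
qed (auto simp: code_wf_trm_def intro: generated_rule[OF mono_wf_trm_rule, where ws = "[]"]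
    simp add: wf_trm_rule_def)

lemma code_wf_trms_complete:
  "\<forall>t\<in>set ts. wf_trm L b t \<Longrightarrow> code_wf_trms L b S (enc_trms ts) (length ts)"
  by (simp add: code_wf_trms_of code_wf_trm_complete)

lemma code_wf_trm_iff:
  "code_wf_trm L b S n \<longleftrightarrow> (\<exists>t. n = enc_trm t \<and> wf_trm L b t)"
  using wf_trm_rule_sound[THEN conjunct1, rule_format, OF _ refl] code_wf_trm_complete unfolding code_wf_trm_def by blast

lemma code_wf_trms_iff:
  "code_wf_trms L b S l k \<longleftrightarrow> (\<exists>ts. l = enc_trms ts \<and> length ts = k \<and> (\<forall>t\<in>set ts. wf_trm L b t))"
  using wf_trm_rule_sound[THEN conjunct2, rule_format, OF _ refl] code_wf_trms_complete unfolding code_wf_trms_def by blast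

lemma definable_code_wf_trm[definable_intros]:
  "computable_lang L \<Longrightarrow> definable_fn a \<Longrightarrow> definable (\<lambda>S e. code_wf_trm L b S (a e))"
  unfolding code_wf_trm_def by (rule definable_generated; (unfold wf_trm_rule_def)?; (intro definable_intros)?)
lemma definable_code_wf_trms[definable_intros]:
  "computable_lang L \<Longrightarrow> definable_fn a \<Longrightarrow> definable_fn c \<Longrightarrow> definable (\<lambda>S e. code_wf_trms L b S (a e) (c e))"
  unfolding code_wf_trms_def by (rule definable_generated; (unfold wf_trm_rule_def)?; (intro definable_intros)?)

definition wf_fm_rule :: "lang \<Rightarrow> bool \<Rightarrow> nat set \<Rightarrow> (nat \<Rightarrow> bool) \<Rightarrow> nat \<Rightarrow> bool" where
  "wf_fm_rule L b S X v \<longleftrightarrow>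
    (\<exists>s u. v = pe 0 (pe s u) \<and> code_wf_trm L b S s \<and> code_wf_trm L b S u) \<or>
    (\<exists>P l k. v = pe 1 (pe P l) \<and> pe P k \<in> parity_codes L \<and> code_wf_trms L b S l k) \<or>
    (\<exists>p. v = pe 2 p \<and> X p) \<or> (\<exists>p. v = pe 3 p \<and> X p) \<or>
    (\<exists>p q. v = pe 4 (pe p q) \<and> X p \<and> X q) \<or> (\<exists>x p. v = pe 5 (pe x p) \<and> X p)"

lemma mono_wf_fm_rule: "mono_rule (wf_fm_rule L b)"
  by (rule mono_ruleI, unfold wf_fm_rule_def, intro conj_mono disj_mono ex_mono imp_refl; assumption)

lemma wf_fm_rule_sound:
  assumes "generated (wf_fm_rule L b) S v"
  shows "\<exists>\<phi>. v = enc_fm \<phi> \<and> wf_fm L b \<phi>"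
  using assms
proof (rule generated_induct[rotated])
  fix X v
  assume r: "wf_fm_rule L b S X v" and ih: "\<And>w. X w \<Longrightarrow> \<exists>\<phi>. w = enc_fm \<phi> \<and> wf_fm L b \<phi>"
  from r show "\<exists>\<phi>. v = enc_fm \<phi> \<and> wf_fm L b \<phi>"
    unfolding wf_fm_rule_def
  proof (elim disjE exE conjE)
    fix s u assume v: "v = pe 0 (pe s u)" and "code_wf_trm L b S s" "code_wf_trm L b S u"
    then obtain t1 t2 where "s = enc_trm t1" "wf_trm L b t1" "u = enc_trm t2" "wf_trm L b t2"
      unfolding code_wf_trm_iff by blast
    then show ?thesis using v by (auto intro!: exI[of _ "FDist t1 t2"])
  next
    fix P l k assume v: "v = pe 1 (pe P l)" and "pe P k \<in> parity_codes L" "code_wf_trms L b S l k"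
    then obtain ts where "l = enc_trms ts" "length ts = k" "\<forall>t\<in>set ts. wf_trm L b t" "P \<in> psyms L" "k = parity L P"
      unfolding code_wf_trms_iff parity_codes_iff by blast
    then show ?thesis using v by (auto intro!: exI[of _ "FPred P ts"])
  next
    fix p assume v: "v = pe 2 p" and "X p"
    then obtain \<phi> where "p = enc_fm \<phi>" "wf_fm L b \<phi>" using ih by blast
    then show ?thesis by (intro exI[of _ "FNeg \<phi>"] conjI) (simp only: v enc_fm.simps, simp)
  next
    fix p assume v: "v = pe 3 p" and "X p"
    then obtain \<phi> where "p = enc_fm \<phi>" "wf_fm L b \<phi>" using ih by blast
    then show ?thesis by (intro exI[of _ "FHalf \<phi>"] conjI) (simp only: v enc_fm.simps, simp)
  next
    fix p q assume v: "v = pe 4 (pe p q)" and "X p" "X q"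
    then obtain \<phi> \<psi> where "p = enc_fm \<phi>" "wf_fm L b \<phi>" "q = enc_fm \<psi>" "wf_fm L b \<psi>" using ih by blast
    then show ?thesis by (intro exI[of _ "FMinus \<phi> \<psi>"] conjI) (simp only: v enc_fm.simps, simp)
  next
    fix x p assume v: "v = pe 5 (pe x p)" and "X p"
    then obtain \<phi> where "p = enc_fm \<phi>" "wf_fm L b \<phi>" using ih by blast
    then show ?thesis by (intro exI[of _ "FSup x \<phi>"] conjI) (simp only: v enc_fm.simps, simp)
  qed
qed

lemma code_wf_fm_complete:
  "wf_fm L b \<phi> \<Longrightarrow> generated (wf_fm_rule L b) S (enc_fm \<phi>)"
proof (induct \<phi>)
  case (FDist s u)
  then show ?case
    by (intro generated_rule[OF mono_wf_fm_rule, where ws = "[]"])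
      (auto simp: wf_fm_rule_def intro: code_wf_trm_complete)
next
  case (FPred P ts)
  then have "code_wf_trms L b S (enc_trms ts) (length ts)" by (intro code_wf_trms_complete) simp
  with FPred show ?case
    by (intro generated_rule[OF mono_wf_fm_rule, where ws = "[]"]) (auto simp: wf_fm_rule_def parity_codes_iff)
next
  case (FNeg \<phi>)
  have "wf_fm_rule L b S (\<lambda>w. w \<in> set [enc_fm \<phi>]) (enc_fm (FNeg \<phi>))" by (simp add: wf_fm_rule_def)
  then show ?case by (rule generated_rule[OF mono_wf_fm_rule]) (use FNeg in simp)
next
  case (FHalf \<phi>)
  have "wf_fm_rule L b S (\<lambda>w. w \<in> set [enc_fm \<phi>]) (enc_fm (FHalf \<phi>))" by (simp add: wf_fm_rule_def)
  then show ?case by (rule generated_rule[OF mono_wf_fm_rule]) (use FHalf in simp)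
next
  case (FMinus \<phi> \<psi>)
  have "wf_fm_rule L b S (\<lambda>w. w \<in> set [enc_fm \<phi>, enc_fm \<psi>]) (enc_fm (FMinus \<phi> \<psi>))"
    by (simp add: wf_fm_rule_def)
  then show ?case by (rule generated_rule[OF mono_wf_fm_rule]) (use FMinus in simp)
next
  case (FSup x \<phi>)
  have "wf_fm_rule L b S (\<lambda>w. w \<in> set [enc_fm \<phi>]) (enc_fm (FSup x \<phi>))" by (simp add: wf_fm_rule_def)
  then show ?case by (rule generated_rule[OF mono_wf_fm_rule]) (use FSup in simp)
qed

lemma code_wf_fm_iff:
  "generated (wf_fm_rule L b) S n \<longleftrightarrow> (\<exists>\<phi>. n = enc_fm \<phi> \<and> wf_fm L b \<phi>)"
proof
  assume "generated (wf_fm_rule L b) S n" then show "\<exists>\<phi>. n = enc_fm \<phi> \<and> wf_fm L b \<phi>" by (rule wf_fm_rule_sound)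
next
  assume "\<exists>\<phi>. n = enc_fm \<phi> \<and> wf_fm L b \<phi>"
  then obtain \<phi> where "n = enc_fm \<phi>" "wf_fm L b \<phi>" by blast
  then show "generated (wf_fm_rule L b) S n" using code_wf_fm_complete by simp
qed

lemma definable_wf_fm_rule[definable_intros]:
  "computable_lang L \<Longrightarrow> definable_fn a \<Longrightarrow> definable (\<lambda>S e. generated (wf_fm_rule L b) S (a e))"
  by (rule definable_generated; (unfold wf_fm_rule_def)?; (intro definable_intros)?)

section \<open>Derivability\<close>

abbreviation cMinus :: "nat \<Rightarrow> nat \<Rightarrow> nat" where "cMinus p q \<equiv> pe 4 (pe p q)"
abbreviation cNeg :: "nat \<Rightarrow> nat" where "cNeg p \<equiv> pe 2 p"
abbreviation cHalf :: "nat \<Rightarrow> nat" where "cHalf p \<equiv> pe 3 p"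
abbreviation cSup :: "nat \<Rightarrow> nat \<Rightarrow> nat" where "cSup x p \<equiv> pe 5 (pe x p)"
abbreviation cDist :: "nat \<Rightarrow> nat \<Rightarrow> nat" where "cDist a c \<equiv> pe 0 (pe a c)"
abbreviation cVar :: "nat \<Rightarrow> nat" where "cVar x \<equiv> pe 0 x"
abbreviation cFn :: "nat \<Rightarrow> nat \<Rightarrow> nat" where "cFn f l \<equiv> pe 1 (pe f l)"
abbreviation code_wf_fm :: "lang \<Rightarrow> bool \<Rightarrow> nat set \<Rightarrow> nat \<Rightarrow> bool" where "code_wf_fm L b S p \<equiv> generated (wf_fm_rule L b) S p"

definition hyp_code :: "lang \<Rightarrow> bool \<Rightarrow> (nat set \<Rightarrow> nat \<Rightarrow> bool) \<Rightarrow> nat set \<Rightarrow> nat \<Rightarrow> bool" where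
  "hyp_code L b H S v \<longleftrightarrow> H S v \<and> code_wf_fm L b S v"
definition A1_code :: "lang \<Rightarrow> bool \<Rightarrow> nat set \<Rightarrow> nat \<Rightarrow> bool" where
  "A1_code L b S v \<longleftrightarrow> (\<exists>p q. code_wf_fm L b S p \<and> code_wf_fm L b S q \<and>
     v = cMinus (cMinus p q) p)"
definition A2_code :: "lang \<Rightarrow> bool \<Rightarrow> nat set \<Rightarrow> nat \<Rightarrow> bool" where
  "A2_code L b S v \<longleftrightarrow> (\<exists>p q r. code_wf_fm L b S p \<and> code_wf_fm L b S q \<and> code_wf_fm L b S r \<and>
     v = cMinus (cMinus (cMinus r p) (cMinus r q)) (cMinus q p))"
definition A3_code :: "lang \<Rightarrow> bool \<Rightarrow> nat set \<Rightarrow> nat \<Rightarrow> bool" where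
  "A3_code L b S v \<longleftrightarrow> (\<exists>p q. code_wf_fm L b S p \<and> code_wf_fm L b S q \<and>
     v = cMinus (cMinus p (cMinus p q)) (cMinus q (cMinus q p)))"
definition A4_code :: "lang \<Rightarrow> bool \<Rightarrow> nat set \<Rightarrow> nat \<Rightarrow> bool" where
  "A4_code L b S v \<longleftrightarrow> (\<exists>p q. code_wf_fm L b S p \<and> code_wf_fm L b S q \<and>
     v = cMinus (cMinus (cNeg p) (cNeg q)) (cMinus q p))"
definition A5_code :: "lang \<Rightarrow> bool \<Rightarrow> nat set \<Rightarrow> nat \<Rightarrow> bool" where
  "A5_code L b S v \<longleftrightarrow> (\<exists>p. code_wf_fm L b S p \<and>
     v = cMinus (cHalf p) (cMinus p (cHalf p)))"
definition A6_code :: "lang \<Rightarrow> bool \<Rightarrow> nat set \<Rightarrow> nat \<Rightarrow> bool" where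
  "A6_code L b S v \<longleftrightarrow> (\<exists>p. code_wf_fm L b S p \<and>
     v = cMinus (cMinus p (cHalf p)) (cHalf p))"
definition A7_code :: "lang \<Rightarrow> bool \<Rightarrow> nat set \<Rightarrow> nat \<Rightarrow> bool" where
  "A7_code L b S v \<longleftrightarrow> (\<exists>p q x. code_wf_fm L b S p \<and> code_wf_fm L b S q \<and>
     v = cMinus (cMinus (cSup x q) (cSup x p)) (cSup x (cMinus q p)))"
definition A8_code :: "lang \<Rightarrow> bool \<Rightarrow> nat set \<Rightarrow> nat \<Rightarrow> bool" where
  "A8_code L b S v \<longleftrightarrow> (\<exists>p t x s. code_wf_fm L b S p \<and> code_wf_trm L b S t \<and> code_free_for S x t p \<and> code_subst_fm S x t p s \<and>
     v = cMinus s (cSup x p))"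
definition A9_code :: "lang \<Rightarrow> bool \<Rightarrow> nat set \<Rightarrow> nat \<Rightarrow> bool" where
  "A9_code L b S v \<longleftrightarrow> (\<exists>p x. code_wf_fm L b S p \<and> \<not> code_fv_fm S p x \<and>
     v = cMinus (cSup x p) p)"
definition A10_code :: "nat \<Rightarrow> bool" where
  "A10_code v \<longleftrightarrow> (\<exists>x. v = cDist (cVar x) (cVar x))"
definition A11_code :: "nat \<Rightarrow> bool" where
  "A11_code v \<longleftrightarrow> (\<exists>x y. v = cMinus (cDist (cVar x) (cVar y)) (cDist (cVar y) (cVar x)))"
definition A12_code :: "nat \<Rightarrow> bool" where
  "A12_code v \<longleftrightarrow> (\<exists>x y z. v = cMinus (cMinus (cDist (cVar x) (cVar z)) (cDist (cVar x) (cVar y))) (cDist (cVar y) (cVar z)))"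
text \<open>In A13 and A14, \<open>FMin a b = FMinus a (FMinus a b)\<close> is unfolded, hence the repeated subterm.\<close>
definition A13_code :: "lang \<Rightarrow> nat set \<Rightarrow> nat \<Rightarrow> bool" where
  "A13_code L S v \<longleftrightarrow> (\<exists>f l l' i z w k kr mr ke me de dr. pe f k \<in> farity_codes L \<and>
   generated var_update_rule S (pe l (pe l' (pe i (pe z (pe w k))))) \<and> canon_dyadic kr mr \<and> canon_dyadic ke me \<and>
   0 < kr \<and> 0 < ke \<and> pe f (pe i (pe (pe kr mr) (pe ke me))) \<in> fmod_codes L \<and>
   generated dyad_rule S (pe me (pe ke de)) \<and> generated dyad_rule S (pe mr (pe kr dr)) \<and>
   v = cMinus (cMinus (cDist (cFn f l) (cFn f l')) de) (cMinus (cMinus (cDist (cFn f l) (cFn f l')) de) (cMinus dr (cDist (cVar z) (cVar w)))))"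
definition A14_code :: "lang \<Rightarrow> nat set \<Rightarrow> nat \<Rightarrow> bool" where
  "A14_code L S v \<longleftrightarrow> (\<exists>f l l' i z w k kr mr ke me de dr. pe f k \<in> parity_codes L \<and>
   generated var_update_rule S (pe l (pe l' (pe i (pe z (pe w k))))) \<and> canon_dyadic kr mr \<and> canon_dyadic ke me \<and>
   0 < kr \<and> 0 < ke \<and> pe f (pe i (pe (pe kr mr) (pe ke me))) \<in> pmod_codes L \<and>
   generated dyad_rule S (pe me (pe ke de)) \<and> generated dyad_rule S (pe mr (pe kr dr)) \<and>
   v = cMinus (cMinus (cMinus (cFn f l) (cFn f l')) de) (cMinus (cMinus (cMinus (cFn f l) (cFn f l')) de) (cMinus dr (cDist (cVar z) (cVar w)))))"
definition MP_code :: "(nat \<Rightarrow> bool) \<Rightarrow> nat \<Rightarrow> bool" where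
  "MP_code X v \<longleftrightarrow> (\<exists>p. X p \<and> X (cMinus v p))"
definition Gen_code :: "(nat \<Rightarrow> bool) \<Rightarrow> nat \<Rightarrow> bool" where
  "Gen_code X v \<longleftrightarrow> (\<exists>x p. X p \<and> v = cSup x p)"

definition axiom_code :: "lang \<Rightarrow> bool \<Rightarrow> nat set \<Rightarrow> nat \<Rightarrow> bool" where
  "axiom_code L b S v \<longleftrightarrow> A1_code L b S v \<or> A2_code L b S v \<or> A3_code L b S v \<or> A4_code L b S v \<or>
     A5_code L b S v \<or> A6_code L b S v \<or> A7_code L b S v \<or> A8_code L b S v \<or> A9_code L b S v \<or>
     A10_code v \<or> A11_code v \<or> A12_code v \<or> A13_code L S v \<or> A14_code L S v"

text \<open>The hypotheses are given as a predicate \<open>H\<close> of the set variable, so that both the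
  fixed theory \<open>T\<close> and the set \<open>S\<close> itself can serve as hypotheses.\<close>
definition deriv_rule ::
  "lang \<Rightarrow> bool \<Rightarrow> (nat set \<Rightarrow> nat \<Rightarrow> bool) \<Rightarrow> nat set \<Rightarrow> (nat \<Rightarrow> bool) \<Rightarrow> nat \<Rightarrow> bool" where
  "deriv_rule L b H S X v \<longleftrightarrow> hyp_code L b H S v \<or> axiom_code L b S v \<or> MP_code X v \<or> Gen_code X v"

lemma mono_deriv_rule: "mono_rule (deriv_rule L b H)"
  by (rule mono_ruleI, unfold deriv_rule_def MP_code_def Gen_code_def, intro conj_mono disj_mono ex_mono imp_refl; assumption)

lemma definable_deriv_rule[definable_intros]:
  assumes "computable_lang L" "\<And>a. definable_fn a \<Longrightarrow> definable (\<lambda>S e. H S (a e))" "definable_fn a"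
  shows "definable (\<lambda>S e. generated (deriv_rule L b H) S (a e))"
  apply (rule definable_generated[OF _ assms(3)])
  unfolding deriv_rule_def hyp_code_def axiom_code_def A1_code_def A2_code_def A3_code_def A4_code_def A5_code_def A6_code_def A7_code_def A8_code_def A9_code_def
    A10_code_def A11_code_def A12_code_def A13_code_def A14_code_def MP_code_def Gen_code_def canon_dyadic_def
  by (intro definable_intros assms(1,2))

lemma A13_code_sound:
  assumes "A13_code L S v"
  shows "\<exists>\<phi>. v = enc_fm \<phi> \<and> deriv L b \<Gamma> \<phi>"
proof -
  obtain f l l' i z w k kr mr ke me de dr where h: "pe f k \<in> farity_codes L"
   "generated var_update_rule S (pe l (pe l' (pe i (pe z (pe w k)))))" "canon_dyadic kr mr" "canon_dyadic ke me"
   "0 < kr" "0 < ke" "pe f (pe i (pe (pe kr mr) (pe ke me))) \<in> fmod_codes L"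
   "generated dyad_rule S (pe me (pe ke de))" "generated dyad_rule S (pe mr (pe kr dr))"
   "v = cMinus (cMinus (cDist (cFn f l) (cFn f l')) de) (cMinus (cMinus (cDist (cFn f l) (cFn f l')) de) (cMinus dr (cDist (cVar z) (cVar w))))"
    using assms unfolding A13_code_def by blast
  obtain xs where xs: "length xs = k" "i < k" "l = enc_vars (xs[i := z])" "l' = enc_vars (xs[i := w])"
    using h(2) generated_var_update_rule_iff by blast
  have fa: "f \<in> fsyms L" "k = farity L f" using h(1) farity_codes_iff by blast+
  have fm: "dval kr mr < fmod L f i (dval ke me)" using h(7) fmod_codes_iff by blast
  have de: "de = enc_fm (dyad me ke)" using h(8) generated_dyad_rule_iff by blast
  have dr: "dr = enc_fm (dyad mr kr)" using h(9) generated_dyad_rule_iff by blast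
  have "v = enc_fm (FMin (FMinus (FDist (TFn f (map TVar (xs[i := z]))) (TFn f (map TVar (xs[i := w])))) (dyad me ke))
                          (FMinus (dyad mr kr) (FDist (TVar z) (TVar w))))"
    by (simp only: h(10) xs(3,4) de dr FMin_def enc_fm.simps enc_trm.simps)
  moreover have "deriv L b \<Gamma> (FMin (FMinus (FDist (TFn f (map TVar (xs[i := z]))) (TFn f (map TVar (xs[i := w])))) (dyad me ke))
                          (FMinus (dyad mr kr) (FDist (TVar z) (TVar w))))"
    by (rule deriv.A13) (use fa xs h(3-6) fm in auto)
  ultimately show ?thesis by blast
qed

lemma A14_code_sound:
  assumes "A14_code L S v"
  shows "\<exists>\<phi>. v = enc_fm \<phi> \<and> deriv L b \<Gamma> \<phi>"
proof -
  obtain f l l' i z w k kr mr ke me de dr where h: "pe f k \<in> parity_codes L"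
   "generated var_update_rule S (pe l (pe l' (pe i (pe z (pe w k)))))" "canon_dyadic kr mr" "canon_dyadic ke me"
   "0 < kr" "0 < ke" "pe f (pe i (pe (pe kr mr) (pe ke me))) \<in> pmod_codes L"
   "generated dyad_rule S (pe me (pe ke de))" "generated dyad_rule S (pe mr (pe kr dr))"
   "v = cMinus (cMinus (cMinus (cFn f l) (cFn f l')) de) (cMinus (cMinus (cMinus (cFn f l) (cFn f l')) de) (cMinus dr (cDist (cVar z) (cVar w))))"
    using assms unfolding A14_code_def by blast
  obtain xs where xs: "length xs = k" "i < k" "l = enc_vars (xs[i := z])" "l' = enc_vars (xs[i := w])"
    using h(2) generated_var_update_rule_iff by blast
  have fa: "f \<in> psyms L" "k = parity L f" using h(1) parity_codes_iff by blast+
  have fm: "dval kr mr < pmod L f i (dval ke me)" using h(7) pmod_codes_iff by blast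
  have de: "de = enc_fm (dyad me ke)" using h(8) generated_dyad_rule_iff by blast
  have dr: "dr = enc_fm (dyad mr kr)" using h(9) generated_dyad_rule_iff by blast
  have "v = enc_fm (FMin (FMinus (FMinus (FPred f (map TVar (xs[i := z]))) (FPred f (map TVar (xs[i := w])))) (dyad me ke))
                          (FMinus (dyad mr kr) (FDist (TVar z) (TVar w))))"
    by (simp only: h(10) xs(3,4) de dr FMin_def enc_fm.simps enc_trm.simps)
  moreover have "deriv L b \<Gamma> (FMin (FMinus (FMinus (FPred f (map TVar (xs[i := z]))) (FPred f (map TVar (xs[i := w])))) (dyad me ke))
                          (FMinus (dyad mr kr) (FDist (TVar z) (TVar w))))"
    by (rule deriv.A14) (use fa xs h(3-6) fm in auto)
  ultimately show ?thesis by blast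
qed

lemma axiom_code_sound:
  assumes "axiom_code L b S v"
  shows "\<exists>\<phi>. v = enc_fm \<phi> \<and> deriv L b \<Gamma> \<phi>"
  using assms unfolding axiom_code_def
proof (elim disjE)
  show ?thesis if "A13_code L S v" using that by (rule A13_code_sound)
  show ?thesis if "A14_code L S v" using that by (rule A14_code_sound)
qed (auto simp: A1_code_def A2_code_def A3_code_def A4_code_def A5_code_def A6_code_def A7_code_def
    A8_code_def A9_code_def A10_code_def A11_code_def A12_code_def code_wf_fm_iff code_wf_trm_iff
    code_free_for_iff code_subst_fm_iff code_fv_fm_iff enc_fm_inj
    intro: deriv.A1 deriv.A2 deriv.A3 deriv.A4 deriv.A5 deriv.A6 deriv.A7 deriv.A8 deriv.A9
    deriv.A10 deriv.A11 deriv.A12)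

lemma deriv_rule_sound:
  assumes "generated (deriv_rule L b H) S v"
  shows "\<exists>\<phi>. v = enc_fm \<phi> \<and> deriv L b {\<psi>. H S (enc_fm \<psi>)} \<phi>"
  using assms
proof (rule generated_induct[rotated])
  fix X v
  assume r: "deriv_rule L b H S X v"
    and ih: "\<And>w. X w \<Longrightarrow> \<exists>\<phi>. w = enc_fm \<phi> \<and> deriv L b {\<psi>. H S (enc_fm \<psi>)} \<phi>"
  from r show "\<exists>\<phi>. v = enc_fm \<phi> \<and> deriv L b {\<psi>. H S (enc_fm \<psi>)} \<phi>"
    unfolding deriv_rule_def
  proof (elim disjE)
    assume "hyp_code L b H S v"
    then show ?thesis by (auto simp: hyp_code_def code_wf_fm_iff intro: deriv.hyp)
  next
    assume "axiom_code L b S v"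
    then show ?thesis by (rule axiom_code_sound)
  next
    assume "MP_code X v"
    then obtain p where "X p" "X (cMinus v p)" unfolding MP_code_def by blast
    then show ?thesis by (fastforce dest!: ih simp: enc_fm_inj intro: deriv.MP)
  next
    assume "Gen_code X v"
    then show ?thesis unfolding Gen_code_def by (fastforce dest!: ih simp: enc_fm_inj intro: deriv.Gen)
  qed
qed

lemma A8_code_complete:
  assumes "wf_fm L b \<phi>" "wf_trm L b t" "free_for x t \<phi>"
  shows "A8_code L b S (enc_fm (FMinus (subst_fm x t \<phi>) (FSup x \<phi>)))"
  unfolding A8_code_def
  by (intro exI[of _ "enc_fm \<phi>"] exI[of _ "enc_trm t"] exI[of _ x] exI[of _ "enc_fm (subst_fm x t \<phi>)"]
      conjI code_wf_fm_complete code_wf_trm_complete code_free_for_complete code_subst_fm_complete)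
    (simp_all add: assms)

lemma A13_code_complete:
  assumes "f \<in> fsyms L" "length xs = farity L f" "i < length xs"
    "canon_dyadic kr mr" "canon_dyadic ke me" "0 < kr" "0 < ke" "dval kr mr < fmod L f i (dval ke me)"
  shows "A13_code L S (enc_fm (FMin (FMinus (FDist (TFn f (map TVar (xs[i := z]))) (TFn f (map TVar (xs[i := w])))) (dyad me ke))
                          (FMinus (dyad mr kr) (FDist (TVar z) (TVar w)))))"
    unfolding A13_code_def
    apply (rule exI[of _ f], rule exI[of _ "enc_vars (xs[i := z])"], rule exI[of _ "enc_vars (xs[i := w])"],
        rule exI[of _ i], rule exI[of _ z], rule exI[of _ w], rule exI[of _ "length xs"],
        rule exI[of _ kr], rule exI[of _ mr], rule exI[of _ ke], rule exI[of _ me],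
        rule exI[of _ "enc_fm (dyad me ke)"], rule exI[of _ "enc_fm (dyad mr kr)"])
    apply (intro conjI)
    using assms var_update_rule_complete[of i xs S z w] by (simp_all add: farity_codes_iff fmod_codes_iff dyad_rule_complete FMin_def canon_dyadic_def)

lemma A14_code_complete:
  assumes "f \<in> psyms L" "length xs = parity L f" "i < length xs"
    "canon_dyadic kr mr" "canon_dyadic ke me" "0 < kr" "0 < ke" "dval kr mr < pmod L f i (dval ke me)"
  shows "A14_code L S (enc_fm (FMin (FMinus (FMinus (FPred f (map TVar (xs[i := z]))) (FPred f (map TVar (xs[i := w])))) (dyad me ke))
                          (FMinus (dyad mr kr) (FDist (TVar z) (TVar w)))))"
    unfolding A14_code_def
    apply (rule exI[of _ f], rule exI[of _ "enc_vars (xs[i := z])"], rule exI[of _ "enc_vars (xs[i := w])"],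
        rule exI[of _ i], rule exI[of _ z], rule exI[of _ w], rule exI[of _ "length xs"],
        rule exI[of _ kr], rule exI[of _ mr], rule exI[of _ ke], rule exI[of _ me],
        rule exI[of _ "enc_fm (dyad me ke)"], rule exI[of _ "enc_fm (dyad mr kr)"])
    apply (intro conjI)
    using assms var_update_rule_complete[of i xs S z w] by (simp_all add: parity_codes_iff pmod_codes_iff dyad_rule_complete FMin_def canon_dyadic_def)

lemma generated_axiom_code: "axiom_code L b S v \<Longrightarrow> generated (deriv_rule L b H) S v"
  by (rule generated_rule[OF mono_deriv_rule, where ws = "[]"]) (simp_all add: deriv_rule_def)

lemma deriv_rule_complete:
  assumes "deriv L b \<Gamma> \<phi>" "\<forall>\<psi>\<in>\<Gamma>. H S (enc_fm \<psi>)"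
  shows "generated (deriv_rule L b H) S (enc_fm \<phi>)"
  using assms
proof (induct rule: deriv.induct)
  case (hyp \<phi>)
  then show ?case
    by (intro generated_rule[OF mono_deriv_rule, where ws = "[]"])
      (auto simp: deriv_rule_def hyp_code_def intro: code_wf_fm_complete)
next
  case (A8 \<phi> t x)
  show ?case
    by (intro generated_axiom_code) (use A8_code_complete[OF A8(1-3)] in \<open>simp add: axiom_code_def\<close>)
next
  case (A13 f xs i kr mr ke me z w)
  then show ?case by (intro generated_axiom_code) (simp add: axiom_code_def A13_code_complete)
next
  case (A14 f xs i kr mr ke me z w)
  then show ?case by (intro generated_axiom_code) (simp add: axiom_code_def A14_code_complete)
next
  case (MP \<phi> \<psi>)
  have r: "deriv_rule L b H S (\<lambda>w. w \<in> set [enc_fm \<phi>, enc_fm (FMinus \<psi> \<phi>)]) (enc_fm \<psi>)"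
    by (auto simp: deriv_rule_def MP_code_def)
  show ?case by (rule generated_rule[OF mono_deriv_rule r]) (use MP in auto)
next
  case (Gen \<phi> x)
  have r: "deriv_rule L b H S (\<lambda>w. w \<in> set [enc_fm \<phi>]) (enc_fm (FSup x \<phi>))"
    by (auto simp: deriv_rule_def Gen_code_def)
  show ?case by (rule generated_rule[OF mono_deriv_rule r]) (use Gen in auto)
qed (intro generated_axiom_code, simp add: axiom_code_def A1_code_def A2_code_def A3_code_def
    A4_code_def A5_code_def A6_code_def A7_code_def A9_code_def A10_code_def A11_code_def
    A12_code_def code_wf_fm_complete code_fv_fm_iff)+

lemma generated_deriv_rule_iff:
  "generated (deriv_rule L b H) S n \<longleftrightarrow> (\<exists>\<phi>. n = enc_fm \<phi> \<and> deriv L b {\<psi>. H S (enc_fm \<psi>)} \<phi>)"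
proof
  assume "generated (deriv_rule L b H) S n" then show "\<exists>\<phi>. n = enc_fm \<phi> \<and> deriv L b {\<psi>. H S (enc_fm \<psi>)} \<phi>"
    by (rule deriv_rule_sound)
next
  assume "\<exists>\<phi>. n = enc_fm \<phi> \<and> deriv L b {\<psi>. H S (enc_fm \<psi>)} \<phi>"
  then obtain \<phi> where h: "n = enc_fm \<phi>" "deriv L b {\<psi>. H S (enc_fm \<psi>)} \<phi>" by blast
  have "generated (deriv_rule L b H) S (enc_fm \<phi>)" by (rule deriv_rule_complete[OF h(2)]) blast
  then show "generated (deriv_rule L b H) S n" unfolding h(1) .
qed

section \<open>The arithmetical characterisation\<close>

lemma dval_less: "dval kp mp < dval kq mq \<longleftrightarrow> kp * 2 ^ mq < kq * 2 ^ mp"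
proof -
  have "dval kp mp < dval kq mq \<longleftrightarrow> real kp * 2 ^ mq < real kq * 2 ^ mp"
    unfolding dval_def by (simp add: divide_less_eq less_divide_eq mult.commute mult.left_commute)
  also have "real kp * 2 ^ mq = real (kp * 2 ^ mq)" by simp
  also have "real kq * 2 ^ mp = real (kq * 2 ^ mp)" by simp
  finally show ?thesis by (simp only: of_nat_less_iff)
qed

definition code_sentence :: "lang \<Rightarrow> bool \<Rightarrow> nat set \<Rightarrow> nat \<Rightarrow> bool" where
  "code_sentence L b S n \<longleftrightarrow> code_wf_fm L b S n \<and> (\<forall>y. \<not> code_fv_fm S n y)"

lemma code_sentence_iff:
  "code_sentence L b S n \<longleftrightarrow> (\<exists>\<phi>. n = enc_fm \<phi> \<and> sentence L b \<phi>)"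
proof
  assume h: "code_sentence L b S n"
  then obtain \<phi> where p: "n = enc_fm \<phi>" "wf_fm L b \<phi>" unfolding code_sentence_def code_wf_fm_iff by blast
  have "\<forall>y. \<not> code_fv_fm S (enc_fm \<phi>) y" using h p(1) unfolding code_sentence_def by simp
  then have "fv_fm \<phi> = {}" unfolding code_fv_fm_iff by blast
  then show "\<exists>\<phi>. n = enc_fm \<phi> \<and> sentence L b \<phi>" using p unfolding sentence_def by blast
next
  assume "\<exists>\<phi>. n = enc_fm \<phi> \<and> sentence L b \<phi>"
  then obtain \<phi> where p: "n = enc_fm \<phi>" "wf_fm L b \<phi>" "fv_fm \<phi> = {}" unfolding sentence_def by blast
  have "code_wf_fm L b S (enc_fm \<phi>)" using p(2) code_wf_fm_complete by blast
  moreover have "\<forall>y. \<not> code_fv_fm S (enc_fm \<phi>) y" unfolding code_fv_fm_iff using p(3) by blast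
  ultimately show "code_sentence L b S n" unfolding code_sentence_def p(1) by blast
qed

lemma code_sentence_enc_fm:
  "code_sentence L b S (enc_fm \<phi>) \<longleftrightarrow> sentence L b \<phi>"
  unfolding code_sentence_iff enc_fm_inj by blast

lemma definable_code_sentence_var:
  "computable_lang L \<Longrightarrow> definable (\<lambda>S e. code_sentence L b S (e 0))"
  unfolding code_sentence_def by (intro definable_intros)

lemma definable_code_sentence[definable_intros]:
  "computable_lang L \<Longrightarrow> definable_fn a \<Longrightarrow> definable (\<lambda>S e. code_sentence L b S (a e))"
  by (rule definable_app1[where R = "\<lambda>S x. code_sentence L b S x", OF definable_code_sentence_var])

definition codes_sentences :: "lang \<Rightarrow> nat set \<Rightarrow> bool" where
  "codes_sentences L S \<longleftrightarrow> (\<forall>n\<in>S. code_sentence L True S n)"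

definition codes_consistent :: "lang \<Rightarrow> nat set \<Rightarrow> bool" where
  "codes_consistent L S \<longleftrightarrow>
     (\<exists>n. code_wf_fm L True S n \<and> \<not> generated (deriv_rule L True (\<lambda>S n. n \<in> S)) S n)"

definition codes_limit_closed :: "lang \<Rightarrow> nat set \<Rightarrow> bool" where
  "codes_limit_closed L S \<longleftrightarrow> (\<forall>\<sigma>. code_sentence L True S \<sigma> \<longrightarrow>
     (\<forall>k. \<exists>d. generated dyad_rule S (pe k (pe 1 d)) \<and> cMinus \<sigma> d \<in> S) \<longrightarrow> \<sigma> \<in> S)"

definition codes_complete :: "lang \<Rightarrow> nat set \<Rightarrow> bool" where
  "codes_complete L S \<longleftrightarrow> (\<forall>\<sigma> \<tau>. code_sentence L True S \<sigma> \<longrightarrow> code_sentence L True S \<tau> \<longrightarrow>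
     cMinus \<sigma> \<tau> \<in> S \<or> cMinus \<tau> \<sigma> \<in> S)"

definition codes_henkin :: "lang \<Rightarrow> nat set \<Rightarrow> bool" where
  "codes_henkin L S \<longleftrightarrow> (\<forall>p x kp mp kq mq. code_wf_fm L True S p \<longrightarrow> (\<forall>y. code_fv_fm S p y \<longrightarrow> y = x) \<longrightarrow>
     canon_dyadic kp mp \<longrightarrow> canon_dyadic kq mq \<longrightarrow> kp * 2 ^ mq < kq * 2 ^ mp \<longrightarrow>
     (\<exists>c s dq dp. generated dyad_rule S (pe mq (pe kq dq)) \<and> generated dyad_rule S (pe mp (pe kp dp)) \<and>
        code_subst_fm S x (pe 2 c) p s \<and>
        cMinus (cMinus (cSup x p) dq) (cMinus (cMinus (cSup x p) dq) (cMinus dp s)) \<in> S))"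

definition codes_universal_consequences :: "lang \<Rightarrow> fm set \<Rightarrow> nat set \<Rightarrow> bool" where
  "codes_universal_consequences L T S \<longleftrightarrow> (\<forall>n. code_sentence L False S n \<longrightarrow>
     generated universal_rule S n \<longrightarrow> generated (deriv_rule L False (\<lambda>S n. n \<in> enc_fm ` T)) S n \<longrightarrow>
     n \<in> S)"

definition codes_mch_extension :: "lang \<Rightarrow> fm set \<Rightarrow> nat set \<Rightarrow> bool" where
  "codes_mch_extension L T S \<longleftrightarrow> codes_sentences L S \<and> codes_consistent L S \<and> codes_limit_closed L S \<and>
     codes_complete L S \<and> codes_henkin L S \<and> codes_universal_consequences L T S"

lemma definable_codes_mch_extension:
  assumes "computable_lang L" "arithmetical_set (enc_fm ` T)"
  shows "definable (\<lambda>S e. codes_mch_extension L T S)"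
  unfolding codes_mch_extension_def codes_sentences_def codes_consistent_def codes_limit_closed_def
    codes_complete_def codes_henkin_def codes_universal_consequences_def canon_dyadic_def Ball_def
  by (intro definable_intros assms(1) definable_mem_arithmetical[OF assms(2)])

lemma all_image_iff:
  "(\<forall>n. (\<exists>x. n = f x \<and> P x) \<longrightarrow> Q n) \<longleftrightarrow> (\<forall>x. P x \<longrightarrow> Q (f x))"
  by blast

lemma enc_fm_image_iff: "enc_fm \<phi> \<in> enc_fm ` T \<longleftrightarrow> \<phi> \<in> T"
  by (auto simp: enc_fm_inj)

lemma codes_sentences_iff:
  "codes_sentences L S \<longleftrightarrow> (\<exists>T'. is_theory L True T' \<and> S = enc_fm ` T')"
proof
  assume "codes_sentences L S"
  then have "S = enc_fm ` {\<phi>. enc_fm \<phi> \<in> S}" and "is_theory L True {\<phi>. enc_fm \<phi> \<in> S}"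
    by (auto simp: codes_sentences_def is_theory_def code_sentence_iff enc_fm_inj)
  then show "\<exists>T'. is_theory L True T' \<and> S = enc_fm ` T'" by blast
qed (auto simp: codes_sentences_def is_theory_def code_sentence_enc_fm)

lemma codes_consistent_iff:
  "codes_consistent L (enc_fm ` T') \<longleftrightarrow> consistent L True T'"
proof -
  have "{\<psi>. enc_fm \<psi> \<in> enc_fm ` T'} = T'" by (auto simp: enc_fm_image_iff)
  then show ?thesis
    by (auto simp: codes_consistent_def consistent_def code_wf_fm_iff generated_deriv_rule_iff enc_fm_inj)
qed

lemma codes_limit_closed_iff:
  "codes_limit_closed L (enc_fm ` T') \<longleftrightarrow>
     (\<forall>\<sigma>. sentence L True \<sigma> \<longrightarrow> (\<forall>n. FMinus \<sigma> (dyad n 1) \<in> T') \<longrightarrow> \<sigma> \<in> T')"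
proof -
  have "(\<exists>d. generated dyad_rule S (pe k (pe 1 d)) \<and> cMinus (enc_fm \<sigma>) d \<in> enc_fm ` T') \<longleftrightarrow>
    FMinus \<sigma> (dyad k 1) \<in> T'" for S k \<sigma>
    by (metis generated_dyad_rule_iff enc_fm.simps(5) enc_fm_image_iff)
  then show ?thesis
    unfolding codes_limit_closed_def code_sentence_iff all_image_iff by (simp add: enc_fm_image_iff)
qed

lemma codes_complete_iff:
  "codes_complete L (enc_fm ` T') \<longleftrightarrow>
     (\<forall>\<sigma> \<tau>. sentence L True \<sigma> \<longrightarrow> sentence L True \<tau> \<longrightarrow> FMinus \<sigma> \<tau> \<in> T' \<or> FMinus \<tau> \<sigma> \<in> T')"
proof -
  have "codes_complete L (enc_fm ` T') \<longleftrightarrow> (\<forall>\<sigma> \<tau>. sentence L True \<sigma> \<longrightarrow> sentence L True \<tau> \<longrightarrow>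
    cMinus (enc_fm \<sigma>) (enc_fm \<tau>) \<in> enc_fm ` T' \<or> cMinus (enc_fm \<tau>) (enc_fm \<sigma>) \<in> enc_fm ` T')"
    unfolding codes_complete_def code_sentence_iff by blast
  moreover have "cMinus (enc_fm \<sigma>) (enc_fm \<tau>) \<in> enc_fm ` T' \<longleftrightarrow> FMinus \<sigma> \<tau> \<in> T'" for \<sigma> \<tau>
    by (metis enc_fm.simps(5) enc_fm_image_iff)
  ultimately show ?thesis by simp
qed

lemma enc_fm_henkin_witness:
  "enc_fm (FMin (FMinus (FSup x \<phi>) (dyad mq kq)) (FMinus (dyad mp kp) (subst_fm x (TCst c) \<phi>))) =
   cMinus (cMinus (cSup x (enc_fm \<phi>)) (enc_fm (dyad mq kq)))
      (cMinus (cMinus (cSup x (enc_fm \<phi>)) (enc_fm (dyad mq kq)))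
        (cMinus (enc_fm (dyad mp kp)) (enc_fm (subst_fm x (TCst c) \<phi>))))"
  by (simp only: FMin_def enc_fm.simps)

lemma codes_henkin_iff: "codes_henkin L (enc_fm ` T') \<longleftrightarrow> henkin L T'"
proof -
  let ?S = "enc_fm ` T'"
  have "(\<exists>c s dq dp. generated dyad_rule ?S (pe mq (pe kq dq)) \<and> generated dyad_rule ?S (pe mp (pe kp dp)) \<and>
        code_subst_fm ?S x (pe 2 c) (enc_fm \<phi>) s \<and>
        cMinus (cMinus (cSup x (enc_fm \<phi>)) dq) (cMinus (cMinus (cSup x (enc_fm \<phi>)) dq) (cMinus dp s)) \<in> ?S)
    \<longleftrightarrow> (\<exists>c. FMin (FMinus (FSup x \<phi>) (dyad mq kq)) (FMinus (dyad mp kp) (subst_fm x (TCst c) \<phi>)) \<in> T')"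
    for x \<phi> kp mp kq mq
    using code_subst_fm_iff[of ?S x "TCst _" \<phi>]
    by (auto simp: generated_dyad_rule_iff enc_fm_henkin_witness[symmetric] enc_fm_image_iff)
  moreover have "(\<forall>y. code_fv_fm ?S (enc_fm \<phi>) y \<longrightarrow> y = x) \<longleftrightarrow> fv_fm \<phi> \<subseteq> {x}" for \<phi> x
    by (auto simp: code_fv_fm_iff)
  ultimately show ?thesis
    unfolding codes_henkin_def henkin_def code_wf_fm_iff dval_less[symmetric]
    by (auto simp: enc_fm_inj)
qed

lemma codes_universal_consequences_iff:
  "codes_universal_consequences L T (enc_fm ` T') \<longleftrightarrow>
     {\<sigma>. sentence L False \<sigma> \<and> universal \<sigma> \<and> deriv L False T \<sigma>} \<subseteq> T'"
proof -
  have "{\<psi>. enc_fm \<psi> \<in> enc_fm ` T} = T" by (auto simp: enc_fm_image_iff)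
  then show ?thesis
    by (auto simp: codes_universal_consequences_def code_sentence_iff generated_universal_rule_iff
        generated_deriv_rule_iff enc_fm_image_iff enc_fm_inj)
qed

lemma codes_mch_extension_iff:
  "codes_mch_extension L T S \<longleftrightarrow> (\<exists>T'. is_theory L True T' \<and> max_consistent L T' \<and> henkin L T' \<and>
     {\<sigma>. sentence L False \<sigma> \<and> universal \<sigma> \<and> deriv L False T \<sigma>} \<subseteq> T' \<and> S = enc_fm ` T')"
  unfolding codes_mch_extension_def codes_sentences_iff max_consistent_def
  by (auto simp: codes_consistent_iff codes_limit_closed_iff codes_complete_iff codes_henkin_iff
      codes_universal_consequences_iff)

theorem mainTheorem16:
  fixes L :: lang and T :: "fm set"
  assumes "is_lang L" and "computable_lang L"
    and "is_theory L False T"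
    and "arithmetical_set (enc_fm ` T)"
  shows "\<exists>\<Phi>0. afv \<Phi>0 = {} \<and>
           (\<forall>S. aholds S (\<lambda>_. 0) \<Phi>0 \<longleftrightarrow>
              (\<exists>T'. is_theory L True T' \<and> max_consistent L T' \<and> henkin L T' \<and>
                    {\<sigma>. sentence L False \<sigma> \<and> universal \<sigma> \<and> deriv L False T \<sigma>} \<subseteq> T' \<and>
                    S = enc_fm ` T'))"
  using definable_codes_mch_extension[OF assms(2,4)] unfolding codes_mch_extension_iff
  by (rule definable_closed_aform)

end
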